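(* Let $E$ be a slim, semimodular diagram such that $c_\ell(E)$ is a coatom of $E$. Then the ideal ${\downarrow}c_\ell(E)=\{x\in E: x\le c_\ell(E)\}$ is a chain contained in $C_\ell(E)$; the set $E^{\circ}=E\setminus{\downarrow}c_\ell(E)$ is a sublattice of $E$ and (with the induced diagram) a slim, semimodular diagram with $|E^{\circ}|=|E|-\operatorname{length}(E)$; and $E^{\circ}$ determines $E$ up to similarity.
   Context: A slim, semimodular diagram is a planar Hasse diagram of a finite (upper) semimodular lattice whose set of join-irreducible elements contains no three-element antichain; diagrams are considered up to similarity (lattice isomorphism preserving left-to-right order of upper covers and of lower covers at every element). The left boundary chain $C_\ell(E)$ is the maximal chain from $0$ to $1$ forming the left boundary of the diagram. An element is doubly irreducible if it has at most one upper cover and at most one lower cover. $c_\ell(E)$ is the smallest doubly irreducible element of $C_\ell(E)$. $\operatorname{length}(E)$ is the length of the lattice (number of edges in a maximal chain). A coatom is an element covered by $1$. *)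

theory Defs
  imports "HOL-Algebra.Lattice"
begin

(* A (planar) diagram is represented, up to similarity, by a finite lattice L
   (HOL-Algebra gorder with eq = (=)) together with its left-right relation
   "lam x y" = "x is to the left of y" on incomparable pairs (Kelly--Rival).
   The relations  x <= y or lam x y  and  x <= y or lam y x  are both linear
   orders of the carrier (a realizer of dimension 2).  *)

definition covers :: "'a gorder \<Rightarrow> 'a \<Rightarrow> 'a \<Rightarrow> bool" where
  "covers L x y \<longleftrightarrow> x \<in> carrier L \<and> y \<in> carrier L \<and> x \<sqsubset>\<^bsub>L\<^esub> y \<and>
     \<not> (\<exists>z\<in>carrier L. x \<sqsubset>\<^bsub>L\<^esub> z \<and> z \<sqsubset>\<^bsub>L\<^esub> y)"

definition incomparable :: "'a gorder \<Rightarrow> 'a \<Rightarrow> 'a \<Rightarrow> bool" where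
  "incomparable L x y \<longleftrightarrow> \<not> x \<sqsubseteq>\<^bsub>L\<^esub> y \<and> \<not> y \<sqsubseteq>\<^bsub>L\<^esub> x"

definition planar_diagram :: "'a gorder \<Rightarrow> ('a \<Rightarrow> 'a \<Rightarrow> bool) \<Rightarrow> bool" where
  "planar_diagram L lam \<longleftrightarrow>
     lattice L \<and> finite (carrier L) \<and> carrier L \<noteq> {} \<and>
     (\<forall>x y. lam x y \<longrightarrow> x \<in> carrier L \<and> y \<in> carrier L \<and> incomparable L x y) \<and>
     (\<forall>x\<in>carrier L. \<forall>y\<in>carrier L. incomparable L x y \<longrightarrow> lam x y \<or> lam y x) \<and>
     (\<forall>x y. \<not> (lam x y \<and> lam y x)) \<and>
     (\<forall>x\<in>carrier L. \<forall>y\<in>carrier L. \<forall>z\<in>carrier L.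
        (x \<sqsubseteq>\<^bsub>L\<^esub> y \<or> lam x y) \<longrightarrow> (y \<sqsubseteq>\<^bsub>L\<^esub> z \<or> lam y z) \<longrightarrow> (x \<sqsubseteq>\<^bsub>L\<^esub> z \<or> lam x z)) \<and>
     (\<forall>x\<in>carrier L. \<forall>y\<in>carrier L. \<forall>z\<in>carrier L.
        (x \<sqsubseteq>\<^bsub>L\<^esub> y \<or> lam y x) \<longrightarrow> (y \<sqsubseteq>\<^bsub>L\<^esub> z \<or> lam z y) \<longrightarrow> (x \<sqsubseteq>\<^bsub>L\<^esub> z \<or> lam z x))"

definition semimodular :: "'a gorder \<Rightarrow> bool" where
  "semimodular L \<longleftrightarrow> (\<forall>a\<in>carrier L. \<forall>b\<in>carrier L.
      covers L (a \<sqinter>\<^bsub>L\<^esub> b) a \<longrightarrow> covers L b (a \<squnion>\<^bsub>L\<^esub> b))"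

definition join_irreducible :: "'a gorder \<Rightarrow> 'a \<Rightarrow> bool" where
  "join_irreducible L x \<longleftrightarrow> x \<in> carrier L \<and> x \<noteq> \<bottom>\<^bsub>L\<^esub> \<and>
     (\<forall>y\<in>carrier L. \<forall>z\<in>carrier L. x = y \<squnion>\<^bsub>L\<^esub> z \<longrightarrow> x = y \<or> x = z)"

definition slim :: "'a gorder \<Rightarrow> bool" where
  "slim L \<longleftrightarrow> \<not> (\<exists>x y z. join_irreducible L x \<and> join_irreducible L y \<and> join_irreducible L z \<and>
       incomparable L x y \<and> incomparable L y z \<and> incomparable L x z)"

definition slim_semimodular_diagram :: "'a gorder \<Rightarrow> ('a \<Rightarrow> 'a \<Rightarrow> bool) \<Rightarrow> bool" where
  "slim_semimodular_diagram L lam \<longleftrightarrow> planar_diagram L lam \<and> slim L \<and> semimodular L"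

definition left_boundary :: "'a gorder \<Rightarrow> ('a \<Rightarrow> 'a \<Rightarrow> bool) \<Rightarrow> 'a set" where
  "left_boundary L lam = {x \<in> carrier L. \<forall>y\<in>carrier L. \<not> lam y x}"

definition doubly_irreducible :: "'a gorder \<Rightarrow> 'a \<Rightarrow> bool" where
  "doubly_irreducible L x \<longleftrightarrow> x \<in> carrier L \<and>
     card {y. covers L x y} \<le> 1 \<and> card {y. covers L y x} \<le> 1"

definition is_cl :: "'a gorder \<Rightarrow> ('a \<Rightarrow> 'a \<Rightarrow> bool) \<Rightarrow> 'a \<Rightarrow> bool" where
  "is_cl L lam c \<longleftrightarrow> c \<in> left_boundary L lam \<and> doubly_irreducible L c \<and>
     (\<forall>d\<in>left_boundary L lam. doubly_irreducible L d \<longrightarrow> c \<sqsubseteq>\<^bsub>L\<^esub> d)"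

definition coatom :: "'a gorder \<Rightarrow> 'a \<Rightarrow> bool" where
  "coatom L c \<longleftrightarrow> covers L c \<top>\<^bsub>L\<^esub>"

definition down_set :: "'a gorder \<Rightarrow> 'a \<Rightarrow> 'a set" where
  "down_set L c = {x \<in> carrier L. x \<sqsubseteq>\<^bsub>L\<^esub> c}"

definition is_chain :: "'a gorder \<Rightarrow> 'a set \<Rightarrow> bool" where
  "is_chain L S \<longleftrightarrow> S \<subseteq> carrier L \<and> (\<forall>x\<in>S. \<forall>y\<in>S. x \<sqsubseteq>\<^bsub>L\<^esub> y \<or> y \<sqsubseteq>\<^bsub>L\<^esub> x)"

definition sublattice :: "'a gorder \<Rightarrow> 'a set \<Rightarrow> bool" where
  "sublattice L S \<longleftrightarrow> S \<subseteq> carrier L \<and> S \<noteq> {} \<and>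
     (\<forall>x\<in>S. \<forall>y\<in>S. x \<squnion>\<^bsub>L\<^esub> y \<in> S \<and> x \<sqinter>\<^bsub>L\<^esub> y \<in> S)"

(* length = number of edges of a longest (maximal) chain *)
definition lattice_length :: "'a gorder \<Rightarrow> nat" where
  "lattice_length L = Max {card C | C. is_chain L C} - 1"

definition induced_order :: "'a gorder \<Rightarrow> 'a set \<Rightarrow> 'a gorder" where
  "induced_order L S = L\<lparr>carrier := S\<rparr>"

definition induced_left :: "('a \<Rightarrow> 'a \<Rightarrow> bool) \<Rightarrow> 'a set \<Rightarrow> 'a \<Rightarrow> 'a \<Rightarrow> bool" where
  "induced_left lam S x y \<longleftrightarrow> lam x y \<and> x \<in> S \<and> y \<in> S"

definition similar :: "'a gorder \<Rightarrow> ('a \<Rightarrow> 'a \<Rightarrow> bool) \<Rightarrow> 'b gorder \<Rightarrow> ('b \<Rightarrow> 'b \<Rightarrow> bool) \<Rightarrow> bool" where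
  "similar L lam L' lam' \<longleftrightarrow> (\<exists>\<phi>. bij_betw \<phi> (carrier L) (carrier L') \<and>
     (\<forall>x\<in>carrier L. \<forall>y\<in>carrier L. x \<sqsubseteq>\<^bsub>L\<^esub> y \<longleftrightarrow> \<phi> x \<sqsubseteq>\<^bsub>L'\<^esub> \<phi> y) \<and>
     (\<forall>x y z. covers L x y \<and> covers L x z \<longrightarrow> (lam y z \<longleftrightarrow> lam' (\<phi> y) (\<phi> z))) \<and>
     (\<forall>x y z. covers L y x \<and> covers L z x \<longrightarrow> (lam y z \<longleftrightarrow> lam' (\<phi> y) (\<phi> z))))"

end

theory Submission
  imports Defs
begin

text \<open>Planarity forces the ideal below \<open>c = c\<^sub>\<ell>(E)\<close> to be a chain on the left boundary:
  walking down the boundary, an element with two lower covers would give its left-boundary lower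
  cover \<open>p\<close> a second upper cover (\<open>p\<close> is not doubly irreducible, as \<open>c\<close> is the least such boundary
  element), which planarity forbids. Slimness gives \<open>E\<^sup>\<circ> = E - \<down>c\<close> a unique minimal element (two of
  them, with \<open>c\<close>, would be three incomparable join-irreducibles), so \<open>E\<^sup>\<circ>\<close> is a sublattice; being an
  upset, it inherits covers and semimodularity, and a join-irreducible of \<open>E\<^sup>\<circ>\<close> that is reducible in
  \<open>E\<close> may be replaced by its meet with \<open>c\<close>, which keeps \<open>E\<^sup>\<circ>\<close> slim. By semimodularity the height of
  an element drops by at most one along a cover, so a longest chain has \<open>|\<down>c|\<close> edges. Finally every
  \<open>b \<le> c\<close> has exactly one upper cover in \<open>E\<^sup>\<circ>\<close>, and this is an order isomorphism of \<open>\<down>c\<close> onto the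
  left boundary of \<open>E\<^sup>\<circ>\<close>; as similarities preserve left boundaries, a similarity of the \<open>E\<^sup>\<circ>\<close>-parts
  extends across these chains to a similarity of the whole diagrams.\<close>

lemma finite_total_trans_has_least:
  assumes "finite A" "A \<noteq> {}"
    and total: "\<And>a b. a \<in> A \<Longrightarrow> b \<in> A \<Longrightarrow> R a b \<or> R b a"
    and trans: "\<And>a b d. a \<in> A \<Longrightarrow> b \<in> A \<Longrightarrow> d \<in> A \<Longrightarrow> R a b \<Longrightarrow> R b d \<Longrightarrow> R a d"
  shows "\<exists>m\<in>A. \<forall>a\<in>A. R m a"
  using assms
proof (induction A rule: finite_ne_induct)
  case (singleton x)
  show ?case using singleton.prems(1)[of x x] by simp
next
  case (insert x F)
  have "\<exists>m\<in>F. \<forall>a\<in>F. R m a"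
  proof (rule insert.IH)
    show "R a b \<or> R b a" if "a \<in> F" "b \<in> F" for a b
      using insert.prems(1)[of a b] that by simp
    show "R a d" if "a \<in> F" "b \<in> F" "d \<in> F" "R a b" "R b d" for a b d
      using insert.prems(2)[of a b d] that by simp
  qed
  then obtain m where m: "m \<in> F" "\<forall>a\<in>F. R m a" ..
  show ?case
  proof (cases "R m x")
    case True
    then show ?thesis using m by blast
  next
    case False
    then have xm: "R x m" using insert.prems(1)[of m x] m(1) by simp
    have "R x a" if "a \<in> F" for a
      using insert.prems(2)[of x m a] xm m that by simp
    moreover have "R x x" using insert.prems(1)[of x x] by simp
    ultimately show ?thesis by blast
  qed
qed

section \<open>Planar lattice diagrams\<close>

locale diagram =
  fixes L :: "'a gorder" (structure) and lam :: "'a \<Rightarrow> 'a \<Rightarrow> bool"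
  assumes planar: "planar_diagram L lam"
begin

lemma planar_diagramD:
  "lattice L" "finite (carrier L)" "carrier L \<noteq> {}"
  "\<forall>x y. lam x y \<longrightarrow> x \<in> carrier L \<and> y \<in> carrier L \<and> incomparable L x y"
  "\<forall>x\<in>carrier L. \<forall>y\<in>carrier L. incomparable L x y \<longrightarrow> lam x y \<or> lam y x"
  "\<forall>x y. \<not> (lam x y \<and> lam y x)"
  "\<forall>x\<in>carrier L. \<forall>y\<in>carrier L. \<forall>z\<in>carrier L.
     (x \<sqsubseteq> y \<or> lam x y) \<longrightarrow> (y \<sqsubseteq> z \<or> lam y z) \<longrightarrow> (x \<sqsubseteq> z \<or> lam x z)"
  "\<forall>x\<in>carrier L. \<forall>y\<in>carrier L. \<forall>z\<in>carrier L.
     (x \<sqsubseteq> y \<or> lam y x) \<longrightarrow> (y \<sqsubseteq> z \<or> lam z y) \<longrightarrow> (x \<sqsubseteq> z \<or> lam z x)"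
  using planar[unfolded planar_diagram_def] by simp_all

sublocale lattice L
  by (rule planar_diagramD(1))

lemma finite_carrier: "finite (carrier L)"
  by (rule planar_diagramD(2))

lemma carrier_nonempty: "carrier L \<noteq> {}"
  by (rule planar_diagramD(3))

sublocale bounded_lattice L
proof
  have "least L (\<Squnion>(carrier L)) (Upper L (carrier L))" "\<Squnion>(carrier L) \<in> carrier L"
    using finite_sup_least finite_carrier carrier_nonempty by auto
  then show "\<exists>x. greatest L x (carrier L)"
    unfolding least_def greatest_def Upper_def by auto
  have "greatest L (\<Sqinter>(carrier L)) (Lower L (carrier L))" "\<Sqinter>(carrier L) \<in> carrier L"
    using finite_inf_greatest finite_carrier carrier_nonempty by auto
  then show "\<exists>x. least L x (carrier L)"
    unfolding least_def greatest_def Lower_def by auto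
qed

lemma lam_incomparable: "lam x y \<Longrightarrow> x \<in> carrier L \<and> y \<in> carrier L \<and> \<not> x \<sqsubseteq> y \<and> \<not> y \<sqsubseteq> x"
  using planar_diagramD(4) unfolding incomparable_def by blast

lemma lam_total: "x \<in> carrier L \<Longrightarrow> y \<in> carrier L \<Longrightarrow> \<not> x \<sqsubseteq> y \<Longrightarrow> \<not> y \<sqsubseteq> x \<Longrightarrow> lam x y \<or> lam y x"
  using planar_diagramD(5) unfolding incomparable_def by blast

lemma lam_asym: "lam x y \<Longrightarrow> \<not> lam y x"
  using planar_diagramD(6) by blast

lemma lam_irrefl: "\<not> lam x x"
  using lam_asym by blast

text \<open>The two linear extensions of the Kelly--Rival realizer: \<open>x \<sqsubseteq> y \<or> lam x y\<close> reads
  ``\<open>x\<close> is below or to the left of \<open>y\<close>'', \<open>x \<sqsubseteq> y \<or> lam y x\<close> ``below or to the right''.\<close>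

lemma left_order_trans:
  "x \<in> carrier L \<Longrightarrow> y \<in> carrier L \<Longrightarrow> z \<in> carrier L \<Longrightarrow>
   x \<sqsubseteq> y \<or> lam x y \<Longrightarrow> y \<sqsubseteq> z \<or> lam y z \<Longrightarrow> x \<sqsubseteq> z \<or> lam x z"
  using planar_diagramD(7) by blast

lemma right_order_trans:
  "x \<in> carrier L \<Longrightarrow> y \<in> carrier L \<Longrightarrow> z \<in> carrier L \<Longrightarrow>
   x \<sqsubseteq> y \<or> lam y x \<Longrightarrow> y \<sqsubseteq> z \<or> lam z y \<Longrightarrow> x \<sqsubseteq> z \<or> lam z x"
  using planar_diagramD(8) by blast

lemma left_and_right_order_le: "x \<sqsubseteq> y \<or> lam x y \<Longrightarrow> x \<sqsubseteq> y \<or> lam y x \<Longrightarrow> x \<sqsubseteq> y"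
  using lam_asym by blast

definition up_set :: "'a \<Rightarrow> 'a set" where
  "up_set x = {w \<in> carrier L. x \<sqsubseteq> w}"

lemma finite_down_set: "finite (down_set L x)"
  unfolding down_set_def using finite_carrier by auto

lemma finite_up_set: "finite (up_set x)"
  unfolding up_set_def using finite_carrier by auto

lemma card_down_set_strict_mono:
  assumes "x \<in> carrier L" "y \<in> carrier L" "x \<sqsubseteq> y" "x \<noteq> y"
  shows "card (down_set L x) < card (down_set L y)"
proof (rule psubset_card_mono[OF finite_down_set])
  have "down_set L x \<subseteq> down_set L y"
    unfolding down_set_def using assms le_trans by auto
  moreover have "y \<in> down_set L y" "y \<notin> down_set L x"
    unfolding down_set_def using assms le_antisym by auto
  ultimately show "down_set L x \<subset> down_set L y" by blast
qed

lemma card_up_set_strict_antimono: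
  assumes "x \<in> carrier L" "y \<in> carrier L" "x \<sqsubseteq> y" "x \<noteq> y"
  shows "card (up_set y) < card (up_set x)"
proof (rule psubset_card_mono[OF finite_up_set])
  have "up_set y \<subseteq> up_set x"
    unfolding up_set_def using assms le_trans by auto
  moreover have "x \<in> up_set x" "x \<notin> up_set y"
    unfolding up_set_def using assms le_antisym by auto
  ultimately show "up_set y \<subset> up_set x" by blast
qed

lemma ex_minimal_below:
  assumes A: "A \<subseteq> carrier L" and a: "a \<in> A"
  shows "\<exists>m\<in>A. m \<sqsubseteq> a \<and> (\<forall>b\<in>A. b \<sqsubseteq> m \<longrightarrow> b = m)"
proof -
  let ?A = "{b \<in> A. b \<sqsubseteq> a}"
  have "finite ?A" using A finite_carrier by (auto intro: finite_subset)
  moreover have "a \<in> ?A" using A a by auto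
  then have "?A \<noteq> {}" by blast
  ultimately obtain m where m: "is_arg_min (\<lambda>b. card (down_set L b)) (\<lambda>b. b \<in> ?A) m"
    using ex_is_arg_min_if_finite by blast
  then have mA: "m \<in> A" "m \<sqsubseteq> a" unfolding is_arg_min_def by auto
  have "b = m" if b: "b \<in> A" "b \<sqsubseteq> m" for b
  proof (rule ccontr)
    assume "b \<noteq> m"
    then have "card (down_set L b) < card (down_set L m)"
      using card_down_set_strict_mono[of b m] b mA A by auto
    moreover have "b \<sqsubseteq> a" using le_trans[of b m a] b mA A a by auto
    ultimately show False using m b(1) unfolding is_arg_min_def by auto
  qed
  then show ?thesis using mA by auto
qed

lemma ex_maximal_above:
  assumes A: "A \<subseteq> carrier L" and a: "a \<in> A"
  shows "\<exists>m\<in>A. a \<sqsubseteq> m \<and> (\<forall>b\<in>A. m \<sqsubseteq> b \<longrightarrow> b = m)"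
proof -
  let ?A = "{b \<in> A. a \<sqsubseteq> b}"
  have "finite ?A" using A finite_carrier by (auto intro: finite_subset)
  moreover have "a \<in> ?A" using A a by auto
  then have "?A \<noteq> {}" by blast
  ultimately obtain m where m: "is_arg_min (\<lambda>b. card (up_set b)) (\<lambda>b. b \<in> ?A) m"
    using ex_is_arg_min_if_finite by blast
  then have mA: "m \<in> A" "a \<sqsubseteq> m" unfolding is_arg_min_def by auto
  have "b = m" if b: "b \<in> A" "m \<sqsubseteq> b" for b
  proof (rule ccontr)
    assume "b \<noteq> m"
    then have "card (up_set b) < card (up_set m)"
      using card_up_set_strict_antimono[of m b] b mA A by auto
    moreover have "a \<sqsubseteq> b" using le_trans[of a m b] b mA A a by auto
    ultimately show False using m b(1) unfolding is_arg_min_def by auto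
  qed
  then show ?thesis using mA by auto
qed

lemma covers_iff:
  "covers L x y \<longleftrightarrow> x \<in> carrier L \<and> y \<in> carrier L \<and> x \<sqsubseteq> y \<and> x \<noteq> y \<and>
     (\<forall>z\<in>carrier L. x \<sqsubseteq> z \<longrightarrow> z \<sqsubseteq> y \<longrightarrow> z = x \<or> z = y)"
  unfolding covers_def lless_eq by auto

lemma coversI:
  "x \<in> carrier L \<Longrightarrow> y \<in> carrier L \<Longrightarrow> x \<sqsubseteq> y \<Longrightarrow> x \<noteq> y \<Longrightarrow>
   (\<And>z. z \<in> carrier L \<Longrightarrow> x \<sqsubseteq> z \<Longrightarrow> z \<sqsubseteq> y \<Longrightarrow> z = x \<or> z = y) \<Longrightarrow> covers L x y"
  unfolding covers_iff by auto

lemma coversD: "covers L x y \<Longrightarrow> z \<in> carrier L \<Longrightarrow> x \<sqsubseteq> z \<Longrightarrow> z \<sqsubseteq> y \<Longrightarrow> z = x \<or> z = y"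
  unfolding covers_iff by auto

lemma covers_carrier: "covers L x y \<Longrightarrow> x \<in> carrier L \<and> y \<in> carrier L"
  unfolding covers_iff by auto

lemma covers_le: "covers L x y \<Longrightarrow> x \<sqsubseteq> y \<and> x \<noteq> y"
  unfolding covers_iff by auto

lemma lower_cover_above:
  assumes "x \<in> carrier L" "y \<in> carrier L" "x \<sqsubseteq> y" "x \<noteq> y"
  shows "\<exists>p. covers L p y \<and> x \<sqsubseteq> p"
proof -
  let ?A = "{z \<in> carrier L. x \<sqsubseteq> z \<and> z \<sqsubseteq> y \<and> z \<noteq> y}"
  have "x \<in> ?A" using assms by auto
  then obtain m where m: "m \<in> ?A" "x \<sqsubseteq> m" and max: "\<forall>z\<in>?A. m \<sqsubseteq> z \<longrightarrow> z = m"
    using ex_maximal_above[of ?A x] by blast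
  have "covers L m y"
  proof (rule coversI)
    fix z assume z: "z \<in> carrier L" "m \<sqsubseteq> z" "z \<sqsubseteq> y"
    have "x \<sqsubseteq> z" using le_trans[of x m z] m z assms by auto
    then show "z = m \<or> z = y" using max z by auto
  qed (use m assms in auto)
  then show ?thesis using m by blast
qed

lemma upper_cover_below:
  assumes "x \<in> carrier L" "y \<in> carrier L" "x \<sqsubseteq> y" "x \<noteq> y"
  shows "\<exists>u. covers L x u \<and> u \<sqsubseteq> y"
proof -
  let ?A = "{z \<in> carrier L. x \<sqsubseteq> z \<and> z \<sqsubseteq> y \<and> z \<noteq> x}"
  have "y \<in> ?A" using assms by auto
  then obtain m where m: "m \<in> ?A" "m \<sqsubseteq> y" and min: "\<forall>z\<in>?A. z \<sqsubseteq> m \<longrightarrow> z = m"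
    using ex_minimal_below[of ?A y] by blast
  have "covers L x m"
  proof (rule coversI)
    fix z assume z: "z \<in> carrier L" "x \<sqsubseteq> z" "z \<sqsubseteq> m"
    have "z \<sqsubseteq> y" using le_trans[of z m y] m z assms by auto
    then show "z = x \<or> z = m" using min z by auto
  qed (use m assms in auto)
  then show ?thesis using m by blast
qed

lemma lower_covers_incomparable: "covers L p x \<Longrightarrow> covers L q x \<Longrightarrow> p \<noteq> q \<Longrightarrow> \<not> p \<sqsubseteq> q"
  unfolding covers_iff by metis

lemma upper_covers_incomparable: "covers L x p \<Longrightarrow> covers L x q \<Longrightarrow> p \<noteq> q \<Longrightarrow> \<not> p \<sqsubseteq> q"
  unfolding covers_iff by metis

lemma join_of_lower_covers:
  assumes px: "covers L p x" and qx: "covers L q x" and "p \<noteq> q"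
  shows "p \<squnion> q = x"
proof -
  have c: "p \<in> carrier L" "q \<in> carrier L" "x \<in> carrier L" using px qx covers_carrier by auto
  have "p \<squnion> q \<sqsubseteq> x" using px qx c join_le covers_le by auto
  moreover have "p \<sqsubseteq> p \<squnion> q" "q \<sqsubseteq> p \<squnion> q" using c join_left join_right by auto
  moreover have "p \<squnion> q \<noteq> p" using lower_covers_incomparable[OF qx px] assms(3) calculation by auto
  ultimately show ?thesis using coversD[OF px, of "p \<squnion> q"] c by auto
qed

lemma meet_of_upper_covers:
  assumes xp: "covers L x p" and xq: "covers L x q" and "p \<noteq> q"
  shows "p \<sqinter> q = x"
proof -
  have c: "p \<in> carrier L" "q \<in> carrier L" "x \<in> carrier L" using xp xq covers_carrier by auto
  have "x \<sqsubseteq> p \<sqinter> q" using xp xq c meet_le covers_le by auto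
  moreover have "p \<sqinter> q \<sqsubseteq> p" "p \<sqinter> q \<sqsubseteq> q" using c meet_left meet_right by auto
  moreover have "p \<sqinter> q \<noteq> p" using upper_covers_incomparable[OF xp xq] assms(3) calculation by auto
  ultimately show ?thesis using coversD[OF xp, of "p \<sqinter> q"] c by auto
qed

lemma card_upper_covers_le_1_iff:
  "card {y. covers L x y} \<le> 1 \<longleftrightarrow> (\<forall>u v. covers L x u \<longrightarrow> covers L x v \<longrightarrow> u = v)"
proof -
  have "finite {y. covers L x y}"
    using covers_carrier finite_carrier by (auto intro: finite_subset)
  then show ?thesis using card_le_Suc0_iff_eq by fastforce
qed

lemma card_lower_covers_le_1_iff:
  "card {y. covers L y x} \<le> 1 \<longleftrightarrow> (\<forall>u v. covers L u x \<longrightarrow> covers L v x \<longrightarrow> u = v)"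
proof -
  have "finite {y. covers L y x}"
    using covers_carrier finite_carrier by (auto intro: finite_subset)
  then show ?thesis using card_le_Suc0_iff_eq by fastforce
qed

lemma join_irreducible_if_down_set_chain:
  assumes xc: "x \<in> carrier L" and "x \<noteq> \<bottom>" and chain: "is_chain L (down_set L x)"
  shows "join_irreducible L x"
  unfolding join_irreducible_def
proof (intro conjI ballI impI xc assms(2))
  fix y z assume yc: "y \<in> carrier L" and zc: "z \<in> carrier L" and x: "x = y \<squnion> z"
  have "y \<in> down_set L x" "z \<in> down_set L x"
    unfolding down_set_def x using yc zc join_left join_right by auto
  then have "y \<sqsubseteq> z \<or> z \<sqsubseteq> y" using chain unfolding is_chain_def by blast
  then show "x = y \<or> x = z"
    using x yc zc le_iff_meet join_comm by metis
qed

lemma join_irreducible_lower_cover: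
  assumes j: "join_irreducible L x"
  obtains p where "covers L p x" "\<And>w. w \<in> carrier L \<Longrightarrow> w \<sqsubseteq> x \<Longrightarrow> w \<noteq> x \<Longrightarrow> w \<sqsubseteq> p"
proof -
  have xc: "x \<in> carrier L" and xb: "x \<noteq> \<bottom>" using j unfolding join_irreducible_def by auto
  obtain p where px: "covers L p x" using lower_cover_above[of "\<bottom>" x] xc xb by auto
  have "w \<sqsubseteq> p" if w: "w \<in> carrier L" "w \<sqsubseteq> x" "w \<noteq> x" for w
  proof -
    obtain q where qx: "covers L q x" and wq: "w \<sqsubseteq> q" using lower_cover_above w xc by blast
    have "q = p"
    proof (rule ccontr)
      assume "q \<noteq> p"
      then have "x = p \<squnion> q" using join_of_lower_covers[OF px qx] by auto
      then show False
        using j px qx covers_carrier covers_le unfolding join_irreducible_def by metis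
    qed
    then show ?thesis using wq by simp
  qed
  then show ?thesis using px that by blast
qed

lemma join_irreducible_if_lower_cover_dominates:
  assumes px: "covers L p x" and below: "\<And>w. w \<in> carrier L \<Longrightarrow> w \<sqsubseteq> x \<Longrightarrow> w \<noteq> x \<Longrightarrow> w \<sqsubseteq> p"
  shows "join_irreducible L x"
  unfolding join_irreducible_def
proof (intro conjI ballI impI)
  have pc: "p \<in> carrier L" and xc: "x \<in> carrier L" and "p \<sqsubseteq> x" "p \<noteq> x"
    using px covers_carrier covers_le by auto
  then show "x \<in> carrier L" "x \<noteq> \<bottom>" using le_antisym[of p x] by auto
  fix y z assume yc: "y \<in> carrier L" and zc: "z \<in> carrier L" and x: "x = y \<squnion> z"
  show "x = y \<or> x = z"
  proof (rule ccontr)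
    assume "\<not> (x = y \<or> x = z)"
    then have "y \<sqsubseteq> p" "z \<sqsubseteq> p" using below yc zc x join_left join_right by auto
    then have "x \<sqsubseteq> p" using x join_le yc zc pc by simp
    then show False using \<open>p \<sqsubseteq> x\<close> \<open>p \<noteq> x\<close> le_antisym pc xc by blast
  qed
qed

abbreviation Cl :: "'a set" where
  "Cl \<equiv> left_boundary L lam"

lemma Cl_iff: "x \<in> Cl \<longleftrightarrow> x \<in> carrier L \<and> (\<forall>y\<in>carrier L. \<not> lam y x)"
  unfolding left_boundary_def by simp

lemma Cl_lam: "x \<in> Cl \<Longrightarrow> y \<in> carrier L \<Longrightarrow> \<not> x \<sqsubseteq> y \<Longrightarrow> \<not> y \<sqsubseteq> x \<Longrightarrow> lam x y"
  using lam_total Cl_iff by metis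

lemma Cl_le_if_left: "x \<in> Cl \<Longrightarrow> y \<in> carrier L \<Longrightarrow> y \<sqsubseteq> x \<or> lam y x \<Longrightarrow> y \<sqsubseteq> x"
  using Cl_iff by metis

lemma Cl_chain: "x \<in> Cl \<Longrightarrow> y \<in> Cl \<Longrightarrow> x \<sqsubseteq> y \<or> y \<sqsubseteq> x"
  using Cl_lam Cl_iff by metis

lemma bot_in_Cl: "\<bottom> \<in> Cl"
  unfolding Cl_iff using lam_incomparable bottom_closed bottom_lower by metis

lemma ex_leftmost_lower_cover:
  assumes xc: "x \<in> carrier L" and "x \<noteq> \<bottom>"
  obtains p where "covers L p x" "\<And>q. covers L q x \<Longrightarrow> q \<noteq> p \<Longrightarrow> lam p q"
proof -
  let ?P = "{p. covers L p x}"
  have "finite ?P" using covers_carrier finite_carrier by (auto intro: finite_subset)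
  moreover have "?P \<noteq> {}" using lower_cover_above[of "\<bottom>" x] assms by auto
  ultimately have "\<exists>p\<in>?P. \<forall>q\<in>?P. p \<sqsubseteq> q \<or> lam p q"
  proof (rule finite_total_trans_has_least)
    fix a b assume "a \<in> ?P" "b \<in> ?P"
    then show "(a \<sqsubseteq> b \<or> lam a b) \<or> (b \<sqsubseteq> a \<or> lam b a)"
      using lam_total[of a b] covers_carrier by auto
  next
    fix a b d assume "a \<in> ?P" "b \<in> ?P" "d \<in> ?P" "a \<sqsubseteq> b \<or> lam a b" "b \<sqsubseteq> d \<or> lam b d"
    then show "a \<sqsubseteq> d \<or> lam a d" using left_order_trans[of a b d] covers_carrier by auto
  qed
  then obtain p where "covers L p x" "\<forall>q. covers L q x \<longrightarrow> p \<sqsubseteq> q \<or> lam p q" by auto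
  then show ?thesis using that lower_covers_incomparable by metis
qed

lemma Cl_leftmost_lower_cover:
  assumes xCl: "x \<in> Cl" and px: "covers L p x"
    and leftmost: "\<And>q. covers L q x \<Longrightarrow> q \<noteq> p \<Longrightarrow> lam p q"
  shows "p \<in> Cl"
  unfolding Cl_iff
proof (intro conjI ballI notI)
  have xc: "x \<in> carrier L" using xCl Cl_iff by simp
  show pc: "p \<in> carrier L" using px covers_carrier by auto
  fix y assume yc: "y \<in> carrier L" and lyp: "lam y p"
  have nyp: "\<not> y \<sqsubseteq> p" "\<not> p \<sqsubseteq> y" using lam_incomparable[OF lyp] by auto
  have "y \<sqsubseteq> x \<or> lam y x" using left_order_trans[OF yc pc xc] lyp px covers_le by auto
  then have "y \<sqsubseteq> x" using Cl_le_if_left[OF xCl yc] by simp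
  moreover have "y \<noteq> x" using nyp(2) px covers_le by auto
  ultimately obtain q where qx: "covers L q x" and yq: "y \<sqsubseteq> q"
    using lower_cover_above[OF yc xc] by auto
  have "q \<noteq> p" using yq nyp by auto
  then have "lam p q" using leftmost qx by blast
  then have "y \<sqsubseteq> p \<or> lam p y" using right_order_trans[of y q p] yc pc yq qx covers_carrier by auto
  then show False using nyp lam_asym lyp by auto
qed

lemma Cl_lower_cover:
  assumes "x \<in> Cl" "x \<noteq> \<bottom>"
  shows "\<exists>p\<in>Cl. covers L p x"
proof -
  obtain p where "covers L p x" "\<And>q. covers L q x \<Longrightarrow> q \<noteq> p \<Longrightarrow> lam p q"
    using ex_leftmost_lower_cover assms Cl_iff by blast
  then show ?thesis using Cl_leftmost_lower_cover assms(1) by blast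
qed

lemma Cl_leftmost_upper_cover:
  assumes pCl: "p \<in> Cl" and pu: "covers L p u"
    and leftmost: "\<And>v. covers L p v \<Longrightarrow> v \<noteq> u \<Longrightarrow> lam u v"
  shows "u \<in> Cl"
  unfolding Cl_iff
proof (intro conjI ballI notI)
  have pc: "p \<in> carrier L" using pCl Cl_iff by simp
  show uc: "u \<in> carrier L" using pu covers_carrier by auto
  have pu_le: "p \<sqsubseteq> u" using pu covers_le by auto
  fix y assume yc: "y \<in> carrier L" and lyu: "lam y u"
  have nyu: "\<not> y \<sqsubseteq> u" "\<not> u \<sqsubseteq> y" using lam_incomparable[OF lyu] by auto
  consider "y \<sqsubseteq> p" | "p \<sqsubseteq> y" "\<not> y \<sqsubseteq> p" | "\<not> p \<sqsubseteq> y" "\<not> y \<sqsubseteq> p" by blast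
  then show False
  proof cases
    case 1
    then show False using le_trans[OF _ pu_le yc pc uc] nyu by blast
  next
    case 2
    then obtain w where pw: "covers L p w" and wy: "w \<sqsubseteq> y"
      using upper_cover_below[OF pc yc] by blast
    have "w \<noteq> u" using wy nyu by auto
    then have "lam u w" using leftmost pw by blast
    then have "u \<sqsubseteq> y \<or> lam u y" using left_order_trans[of u w y] uc yc wy pw covers_carrier by auto
    then show False using nyu lam_asym lyu by auto
  next
    case 3
    then have "lam p y" using Cl_lam[OF pCl yc] by blast
    then have "y \<sqsubseteq> u \<or> lam u y" using right_order_trans[OF yc pc uc] pu_le by auto
    then show False using nyu lam_asym lyu by auto
  qed
qed

lemma Cl_unique_upper_cover:
  assumes pCl: "p \<in> Cl" and xCl: "x \<in> Cl" and px: "covers L p x"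
    and qx: "covers L q x" and "q \<noteq> p" and pu: "covers L p u"
  shows "u = x"
proof (rule ccontr)
  assume "u \<noteq> x"
  have c: "p \<in> carrier L" "q \<in> carrier L" "x \<in> carrier L" "u \<in> carrier L"
    using px qx pu covers_carrier by auto
  have "\<not> p \<sqsubseteq> q" "\<not> q \<sqsubseteq> p"
    using lower_covers_incomparable[OF px qx] lower_covers_incomparable[OF qx px] \<open>q \<noteq> p\<close> by auto
  then have "lam p q" using Cl_lam[OF pCl c(2)] by simp
  moreover have nxu: "\<not> x \<sqsubseteq> u" "\<not> u \<sqsubseteq> x"
    using upper_covers_incomparable[OF px pu] upper_covers_incomparable[OF pu px] \<open>u \<noteq> x\<close> by auto
  then have "lam x u" using Cl_lam[OF xCl c(4)] by simp
  ultimately have "q \<sqsubseteq> u \<or> lam q u" "q \<sqsubseteq> u \<or> lam u q"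
    using left_order_trans[of q x u] right_order_trans[of q p u] c px qx pu covers_le by auto
  then have "q \<sqsubseteq> u" by (rule left_and_right_order_le)
  then have "p \<squnion> q \<sqsubseteq> u" using join_le pu covers_le c by auto
  then show False using join_of_lower_covers[OF px qx] \<open>q \<noteq> p\<close> nxu by auto
qed

definition height_above :: "'a \<Rightarrow> nat" where
  "height_above x = Max {card C | C. is_chain L C \<and> C \<subseteq> up_set x}"

lemma finite_chain_cards: "finite {card C | C. is_chain L C \<and> C \<subseteq> up_set x}"
proof -
  have "{C. is_chain L C \<and> C \<subseteq> up_set x} \<subseteq> Pow (carrier L)" unfolding is_chain_def by auto
  then have "finite {C. is_chain L C \<and> C \<subseteq> up_set x}"
    using finite_carrier finite_subset by blast
  then show ?thesis by (simp add: setcompr_eq_image)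
qed

lemma card_chain_le_height_above: "is_chain L C \<Longrightarrow> C \<subseteq> up_set x \<Longrightarrow> card C \<le> height_above x"
  unfolding height_above_def using finite_chain_cards by (intro Max_ge) auto

lemma ex_chain_height_above: "\<exists>C. is_chain L C \<and> C \<subseteq> up_set x \<and> card C = height_above x"
proof -
  have "is_chain L {}" unfolding is_chain_def by simp
  then have "{card C | C. is_chain L C \<and> C \<subseteq> up_set x} \<noteq> {}" by auto
  then have "height_above x \<in> {card C | C. is_chain L C \<and> C \<subseteq> up_set x}"
    unfolding height_above_def by (rule Max_in[OF finite_chain_cards])
  then show ?thesis by auto
qed

lemma is_chain_insert_below:
  "is_chain L C \<Longrightarrow> C \<subseteq> up_set b \<Longrightarrow> b \<in> carrier L \<Longrightarrow> is_chain L (insert b C) \<and> insert b C \<subseteq> up_set b"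
  unfolding is_chain_def up_set_def by auto

lemma is_chain_has_least:
  assumes C: "is_chain L C" and "C \<noteq> {}"
  obtains m where "m \<in> C" "\<And>w. w \<in> C \<Longrightarrow> m \<sqsubseteq> w"
proof -
  have Cc: "C \<subseteq> carrier L" using C unfolding is_chain_def by blast
  have "\<exists>m\<in>C. \<forall>w\<in>C. m \<sqsubseteq> w"
  proof (rule finite_total_trans_has_least)
    show "finite C" using Cc finite_carrier finite_subset by blast
    show "u \<sqsubseteq> v \<or> v \<sqsubseteq> u" if "u \<in> C" "v \<in> C" for u v
      using C that unfolding is_chain_def by auto
    show "u \<sqsubseteq> w" if "u \<in> C" "v \<in> C" "w \<in> C" "u \<sqsubseteq> v" "v \<sqsubseteq> w" for u v w
      using le_trans[of u v w] that Cc by auto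
  qed (rule \<open>C \<noteq> {}\<close>)
  then show ?thesis using that by blast
qed

lemma height_above_top: "height_above \<top> \<le> 1"
proof -
  obtain C where C: "is_chain L C" "C \<subseteq> up_set \<top>" "card C = height_above \<top>"
    using ex_chain_height_above by blast
  have "up_set \<top> \<subseteq> {\<top>}" unfolding up_set_def using top_higher le_antisym top_closed by auto
  then show ?thesis using C card_mono[of "{\<top>}" C] by simp
qed

lemma height_above_cover_le:
  assumes bj: "covers L b j"
  shows "height_above j + 1 \<le> height_above b"
proof -
  obtain C where C: "is_chain L C" "C \<subseteq> up_set j" "card C = height_above j"
    using ex_chain_height_above by blast
  have bc: "b \<in> carrier L" and jc: "j \<in> carrier L" using bj covers_carrier by auto
  have "b \<notin> C"
  proof
    assume "b \<in> C"
    then have "j \<sqsubseteq> b" using C(2) unfolding up_set_def by auto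
    then show False using bj covers_le le_antisym[of b j] bc jc by auto
  qed
  moreover have "C \<subseteq> up_set b"
    using C(2) bj covers_le le_trans[of b j] bc jc unfolding up_set_def by auto
  moreover have "finite C" using C(1) finite_carrier finite_subset unfolding is_chain_def by metis
  ultimately show ?thesis
    using card_chain_le_height_above is_chain_insert_below[OF C(1) _ bc] C(3) by fastforce
qed

lemma lattice_length_eq_height_above_bot: "lattice_length L = height_above \<bottom> - 1"
proof -
  have "C \<subseteq> up_set \<bottom>" if "is_chain L C" for C
    using that unfolding is_chain_def up_set_def by auto
  then have "{card C | C. is_chain L C} = {card C | C. is_chain L C \<and> C \<subseteq> up_set \<bottom>}" by blast
  then show ?thesis unfolding lattice_length_def height_above_def by simp
qed

end

section \<open>Induced diagrams\<close>

lemma induced_order_simps [simp]: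
  "carrier (induced_order L S) = S" "le (induced_order L S) = le L" "eq (induced_order L S) = eq L"
  unfolding induced_order_def by simp_all

lemma incomparable_induced_order [simp]: "incomparable (induced_order L S) x y \<longleftrightarrow> incomparable L x y"
  unfolding incomparable_def by simp

context diagram
begin

lemma induced_partial_order:
  assumes "S \<subseteq> carrier L"
  shows "partial_order (induced_order L S)"
  using assms by unfold_locales (auto simp: eq_is_equal intro: le_trans)

lemma induced_sup_least:
  assumes S: "sublattice L S" and "x \<in> S" "y \<in> S"
  shows "least (induced_order L S) (x \<squnion> y) (Upper (induced_order L S) {x, y})"
  using assms join_left join_right join_le unfolding sublattice_def least_def Upper_def
  by (auto simp: subset_iff)

lemma induced_inf_greatest:
  assumes S: "sublattice L S" and "x \<in> S" "y \<in> S"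
  shows "greatest (induced_order L S) (x \<sqinter> y) (Lower (induced_order L S) {x, y})"
  using assms meet_left meet_right meet_le unfolding sublattice_def greatest_def Lower_def
  by (auto simp: subset_iff)

lemma induced_lattice:
  assumes S: "sublattice L S"
  shows "lattice (induced_order L S)"
proof -
  interpret P: partial_order "induced_order L S"
    using S induced_partial_order unfolding sublattice_def by blast
  show ?thesis
  proof unfold_locales
    fix x y assume "x \<in> carrier (induced_order L S)" "y \<in> carrier (induced_order L S)"
    then show "\<exists>s. least (induced_order L S) s (Upper (induced_order L S) {x, y})"
      using induced_sup_least[OF S] by auto
  next
    fix x y assume "x \<in> carrier (induced_order L S)" "y \<in> carrier (induced_order L S)"
    then show "\<exists>s. greatest (induced_order L S) s (Lower (induced_order L S) {x, y})"
      using induced_inf_greatest[OF S] by auto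
  qed
qed

lemma induced_join:
  assumes S: "sublattice L S" and xy: "x \<in> S" "y \<in> S"
  shows "x \<squnion>\<^bsub>induced_order L S\<^esub> y = x \<squnion> y"
proof -
  interpret P: lattice "induced_order L S" using induced_lattice[OF S] .
  have "least (induced_order L S) (x \<squnion>\<^bsub>induced_order L S\<^esub> y) (Upper (induced_order L S) {x, y})"
    using P.sup_of_two_least xy unfolding join_def by simp
  then show ?thesis using P.least_unique induced_sup_least[OF S xy] by metis
qed

lemma induced_meet:
  assumes S: "sublattice L S" and xy: "x \<in> S" "y \<in> S"
  shows "x \<sqinter>\<^bsub>induced_order L S\<^esub> y = x \<sqinter> y"
proof -
  interpret P: lattice "induced_order L S" using induced_lattice[OF S] .
  have "greatest (induced_order L S) (x \<sqinter>\<^bsub>induced_order L S\<^esub> y) (Lower (induced_order L S) {x, y})"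
    using P.inf_of_two_greatest xy unfolding meet_def by simp
  then show ?thesis using P.greatest_unique induced_inf_greatest[OF S xy] by metis
qed

lemma planar_diagram_induced:
  assumes S: "sublattice L S"
  shows "planar_diagram (induced_order L S) (induced_left lam S)"
  unfolding planar_diagram_def
proof (intro conjI)
  have sub: "S \<subseteq> carrier L" using S unfolding sublattice_def by blast
  show "lattice (induced_order L S)" using induced_lattice[OF S] .
  show "finite (carrier (induced_order L S))" using finite_carrier sub finite_subset by auto
  show "carrier (induced_order L S) \<noteq> {}" using S unfolding sublattice_def by simp
  show "\<forall>x y. induced_left lam S x y \<longrightarrow>
      x \<in> carrier (induced_order L S) \<and> y \<in> carrier (induced_order L S) \<and> incomparable (induced_order L S) x y"
    using lam_incomparable unfolding induced_left_def incomparable_def by simp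
  show "\<forall>x\<in>carrier (induced_order L S). \<forall>y\<in>carrier (induced_order L S).
      incomparable (induced_order L S) x y \<longrightarrow> induced_left lam S x y \<or> induced_left lam S y x"
  proof (intro ballI impI)
    fix x y assume "x \<in> carrier (induced_order L S)" "y \<in> carrier (induced_order L S)"
      "incomparable (induced_order L S) x y"
    then show "induced_left lam S x y \<or> induced_left lam S y x"
      using lam_total[of x y] sub unfolding induced_left_def incomparable_def by auto
  qed
  show "\<forall>x y. \<not> (induced_left lam S x y \<and> induced_left lam S y x)"
    using lam_asym unfolding induced_left_def by blast
  show "\<forall>x\<in>carrier (induced_order L S). \<forall>y\<in>carrier (induced_order L S). \<forall>z\<in>carrier (induced_order L S).
      (x \<sqsubseteq>\<^bsub>induced_order L S\<^esub> y \<or> induced_left lam S x y) \<longrightarrow>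
      (y \<sqsubseteq>\<^bsub>induced_order L S\<^esub> z \<or> induced_left lam S y z) \<longrightarrow>
      (x \<sqsubseteq>\<^bsub>induced_order L S\<^esub> z \<or> induced_left lam S x z)"
  proof (intro ballI impI)
    fix x y z assume "x \<in> carrier (induced_order L S)" "y \<in> carrier (induced_order L S)"
      "z \<in> carrier (induced_order L S)" "x \<sqsubseteq>\<^bsub>induced_order L S\<^esub> y \<or> induced_left lam S x y"
      "y \<sqsubseteq>\<^bsub>induced_order L S\<^esub> z \<or> induced_left lam S y z"
    then show "x \<sqsubseteq>\<^bsub>induced_order L S\<^esub> z \<or> induced_left lam S x z"
      using left_order_trans[of x y z] sub unfolding induced_left_def by auto
  qed
  show "\<forall>x\<in>carrier (induced_order L S). \<forall>y\<in>carrier (induced_order L S). \<forall>z\<in>carrier (induced_order L S).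
      (x \<sqsubseteq>\<^bsub>induced_order L S\<^esub> y \<or> induced_left lam S y x) \<longrightarrow>
      (y \<sqsubseteq>\<^bsub>induced_order L S\<^esub> z \<or> induced_left lam S z y) \<longrightarrow>
      (x \<sqsubseteq>\<^bsub>induced_order L S\<^esub> z \<or> induced_left lam S z x)"
  proof (intro ballI impI)
    fix x y z assume "x \<in> carrier (induced_order L S)" "y \<in> carrier (induced_order L S)"
      "z \<in> carrier (induced_order L S)" "x \<sqsubseteq>\<^bsub>induced_order L S\<^esub> y \<or> induced_left lam S y x"
      "y \<sqsubseteq>\<^bsub>induced_order L S\<^esub> z \<or> induced_left lam S z y"
    then show "x \<sqsubseteq>\<^bsub>induced_order L S\<^esub> z \<or> induced_left lam S z x"
      using right_order_trans[of x y z] sub unfolding induced_left_def by auto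
  qed
qed

definition up_closed :: "'a set \<Rightarrow> bool" where
  "up_closed S \<longleftrightarrow> S \<subseteq> carrier L \<and> (\<forall>x\<in>S. \<forall>z\<in>carrier L. x \<sqsubseteq> z \<longrightarrow> z \<in> S)"

lemma covers_induced_iff:
  assumes "up_closed S"
  shows "covers (induced_order L S) x y \<longleftrightarrow> x \<in> S \<and> y \<in> S \<and> covers L x y"
proof -
  have S: "S \<subseteq> carrier L" and up: "\<And>x z. x \<in> S \<Longrightarrow> z \<in> carrier L \<Longrightarrow> x \<sqsubseteq> z \<Longrightarrow> z \<in> S"
    using assms unfolding up_closed_def by auto
  have "covers (induced_order L S) x y \<longleftrightarrow> x \<in> S \<and> y \<in> S \<and> x \<sqsubseteq> y \<and> x \<noteq> y \<and>
      (\<forall>z\<in>S. x \<sqsubseteq> z \<longrightarrow> z \<sqsubseteq> y \<longrightarrow> z = x \<or> z = y)"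
    unfolding covers_def lless_def by (auto simp: eq_is_equal)
  also have "\<dots> \<longleftrightarrow> x \<in> S \<and> y \<in> S \<and> x \<sqsubseteq> y \<and> x \<noteq> y \<and>
      (\<forall>z\<in>carrier L. x \<sqsubseteq> z \<longrightarrow> z \<sqsubseteq> y \<longrightarrow> z = x \<or> z = y)"
    using S up by (auto simp: subset_iff)
  also have "\<dots> \<longleftrightarrow> x \<in> S \<and> y \<in> S \<and> covers L x y"
    using covers_iff[of x y] S by auto
  finally show ?thesis .
qed

end

section \<open>Slim semimodular diagrams\<close>

locale slim_semimodular = diagram +
  assumes slim: "slim L" and semimodular: "semimodular L"
begin

lemma semimodularD: "a \<in> carrier L \<Longrightarrow> b \<in> carrier L \<Longrightarrow> covers L (a \<sqinter> b) a \<Longrightarrow> covers L b (a \<squnion> b)"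
  using semimodular unfolding semimodular_def by blast

lemma upper_covers_covered_by_join:
  assumes au: "covers L a u" and av: "covers L a v" and "u \<noteq> v"
  shows "covers L u (u \<squnion> v)" "covers L v (u \<squnion> v)"
proof -
  have c: "u \<in> carrier L" "v \<in> carrier L" using au av covers_carrier by auto
  have "u \<sqinter> v = a" "v \<sqinter> u = a"
    using meet_of_upper_covers[OF au av] meet_of_upper_covers[OF av au] \<open>u \<noteq> v\<close> by auto
  then have "covers L v (u \<squnion> v)" "covers L u (v \<squnion> u)"
    using semimodularD[OF c] semimodularD[OF c(2,1)] au av by simp_all
  then show "covers L u (u \<squnion> v)" "covers L v (u \<squnion> v)" by (simp_all add: join_comm)
qed

lemma semimodular_induced:
  assumes S: "sublattice L S" and up: "up_closed S"
  shows "semimodular (induced_order L S)"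
  unfolding semimodular_def
proof (intro ballI impI)
  fix a b assume "a \<in> carrier (induced_order L S)" "b \<in> carrier (induced_order L S)"
    and cov: "covers (induced_order L S) (a \<sqinter>\<^bsub>induced_order L S\<^esub> b) a"
  then have ab: "a \<in> S" "b \<in> S" by auto
  then have abc: "a \<in> carrier L" "b \<in> carrier L" and "a \<squnion> b \<in> S"
    using S unfolding sublattice_def by auto
  have "covers L (a \<sqinter> b) a"
    using cov induced_meet[OF S ab] covers_induced_iff[OF up] by simp
  then have "covers L b (a \<squnion> b)" using semimodularD abc by blast
  then show "covers (induced_order L S) b (a \<squnion>\<^bsub>induced_order L S\<^esub> b)"
    using induced_join[OF S ab] covers_induced_iff[OF up] ab \<open>a \<squnion> b \<in> S\<close> by simp
qed

lemma height_above_le_upper_cover: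
  assumes ac: "a \<in> carrier L" and "a \<noteq> \<top>"
  shows "\<exists>u. covers L a u \<and> height_above a \<le> height_above u + 1"
proof -
  obtain C where C: "is_chain L C" "C \<subseteq> up_set a" "card C = height_above a"
    using ex_chain_height_above by blast
  have Cc: "C \<subseteq> carrier L" using C(1) unfolding is_chain_def by blast
  have fC: "finite C" using Cc finite_carrier finite_subset by blast
  show ?thesis
  proof (cases "C - {a} = {}")
    case True
    then have "C \<subseteq> {a}" by blast
    then have "height_above a \<le> 1" using C(3) card_mono[of "{a}" C] by simp
    moreover obtain u where "covers L a u"
      using upper_cover_below[of a \<top>] ac \<open>a \<noteq> \<top>\<close> by auto
    ultimately show ?thesis by auto
  next
    case False
    have chain: "is_chain L (C - {a})" using C(1) unfolding is_chain_def by auto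
    then obtain m where mC': "m \<in> C - {a}" and least: "\<And>w. w \<in> C - {a} \<Longrightarrow> m \<sqsubseteq> w"
      using is_chain_has_least[OF chain False] by blast
    then have mC: "m \<in> C" "m \<noteq> a" by auto
    have mc: "m \<in> carrier L" and am: "a \<sqsubseteq> m" using mC C(2) unfolding up_set_def by auto
    obtain u where au: "covers L a u" and um: "u \<sqsubseteq> m"
      using upper_cover_below[OF ac mc am] mC(2) by auto
    have uc: "u \<in> carrier L" using au covers_carrier by auto
    have "C - {a} \<subseteq> up_set u"
    proof
      fix w assume w: "w \<in> C - {a}"
      then have "w \<in> carrier L" "m \<sqsubseteq> w" using Cc least by auto
      then show "w \<in> up_set u" using le_trans[of u m w] um uc mc unfolding up_set_def by auto
    qed
    then have "card (C - {a}) \<le> height_above u"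
      using card_chain_le_height_above[OF chain] by blast
    moreover have "card C \<le> card (C - {a}) + 1"
      using fC card_Suc_Diff1[OF fC, of a] by (cases "a \<in> C") auto
    ultimately have "height_above a \<le> height_above u + 1" using C(3) by simp
    then show ?thesis using au by blast
  qed
qed

lemma height_above_cover: "covers L a b \<Longrightarrow> height_above a \<le> height_above b + 1"
proof (induction "card (up_set a)" arbitrary: a b rule: less_induct)
  case less
  have ac: "a \<in> carrier L" and bc: "b \<in> carrier L" and ab: "a \<sqsubseteq> b" "a \<noteq> b"
    using less.prems covers_carrier covers_le by auto
  have "a \<noteq> \<top>" using ab top_higher[OF bc] le_antisym[of a b] ac bc by auto
  then obtain u where au: "covers L a u" and hu: "height_above a \<le> height_above u + 1"
    using height_above_le_upper_cover ac by blast
  show ?case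
  proof (cases "u = b")
    case False
    then have "covers L u (u \<squnion> b)" "covers L b (u \<squnion> b)"
      using upper_covers_covered_by_join[OF au less.prems] by auto
    moreover have "card (up_set u) < card (up_set a)"
      using card_up_set_strict_antimono[of a u] au covers_le covers_carrier by auto
    ultimately have "height_above u \<le> height_above (u \<squnion> b) + 1"
      "height_above (u \<squnion> b) + 1 \<le> height_above b"
      using less.hyps height_above_cover_le by blast+
    then show ?thesis using hu by simp
  qed (use hu in simp)
qed

lemma down_set_unique_lower_cover:
  assumes px: "covers L p x" and unique: "\<And>q. covers L q x \<Longrightarrow> q = p"
  shows "down_set L x = insert x (down_set L p)"
proof
  have pc: "p \<in> carrier L" and xc: "x \<in> carrier L" and "p \<sqsubseteq> x" using px covers_carrier covers_le by auto
  then show "insert x (down_set L p) \<subseteq> down_set L x"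
    unfolding down_set_def using le_trans[of _ p x] by auto
  show "down_set L x \<subseteq> insert x (down_set L p)"
  proof
    fix w assume w: "w \<in> down_set L x"
    show "w \<in> insert x (down_set L p)"
    proof (cases "w = x")
      case False
      have wc: "w \<in> carrier L" "w \<sqsubseteq> x" using w unfolding down_set_def by auto
      obtain q where "covers L q x" "w \<sqsubseteq> q"
        using lower_cover_above[OF wc(1) xc wc(2) False] by auto
      then show ?thesis using unique wc unfolding down_set_def by auto
    qed simp
  qed
qed

lemma lower_cover_unique_if_down_set_chain:
  assumes chain: "is_chain L (down_set L x)" and px: "covers L p x" and qx: "covers L q x"
  shows "q = p"
proof -
  have "q \<in> down_set L x" "p \<in> down_set L x"
    using qx px covers_carrier covers_le unfolding down_set_def by auto
  then show ?thesis
    using chain lower_covers_incomparable[OF qx px] lower_covers_incomparable[OF px qx]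
    unfolding is_chain_def by blast
qed

lemma height_above_bot_le:
  "x \<in> carrier L \<Longrightarrow> is_chain L (down_set L x) \<Longrightarrow> height_above \<bottom> + 1 \<le> height_above x + card (down_set L x)"
proof (induction "card (down_set L x)" arbitrary: x rule: less_induct)
  case less
  show ?case
  proof (cases "x = \<bottom>")
    case True
    have "down_set L \<bottom> = {\<bottom>}" unfolding down_set_def using le_antisym by auto
    then show ?thesis using True by simp
  next
    case False
    obtain p where px: "covers L p x" using lower_cover_above[of "\<bottom>" x] less.prems False by auto
    have pc: "p \<in> carrier L" using px covers_carrier by auto
    have eq: "down_set L x = insert x (down_set L p)"
      using down_set_unique_lower_cover[OF px] lower_cover_unique_if_down_set_chain less.prems(2) px
      by blast
    moreover have "x \<notin> down_set L p"
      unfolding down_set_def using px covers_le le_antisym pc less.prems(1) by blast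
    ultimately have card_eq: "card (down_set L x) = card (down_set L p) + 1"
      using finite_down_set by simp
    have "is_chain L (down_set L p)" using less.prems(2) eq unfolding is_chain_def by blast
    then have "height_above \<bottom> + 1 \<le> height_above p + card (down_set L p)"
      using less.hyps card_eq pc by simp
    then show ?thesis using height_above_cover[OF px] card_eq by simp
  qed
qed

end

section \<open>The ideal below \<open>c\<^sub>\<ell>(E)\<close>\<close>

locale cl_coatom = slim_semimodular +
  fixes c :: 'a
  assumes is_cl: "is_cl L lam c" and coatom: "coatom L c"
begin

lemma c_in_Cl: "c \<in> Cl"
  using is_cl unfolding is_cl_def by simp

lemma c_carrier: "c \<in> carrier L"
  using c_in_Cl Cl_iff by simp

lemma c_covered_by_top: "covers L c \<top>"
  using coatom unfolding coatom_def .

lemma not_doubly_irreducible_below_c: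
  assumes "d \<in> Cl" "d \<sqsubseteq> c" "d \<noteq> c"
  shows "\<not> doubly_irreducible L d"
  using is_cl assms le_antisym[of c d] c_carrier Cl_iff unfolding is_cl_def by auto

lemma Cl_down_set_chain: "x \<in> Cl \<Longrightarrow> x \<sqsubseteq> c \<Longrightarrow> is_chain L (down_set L x)"
proof (induction "card (down_set L x)" arbitrary: x rule: less_induct)
  case less
  have xc: "x \<in> carrier L" using less.prems(1) Cl_iff by simp
  show ?case
  proof (cases "x = \<bottom>")
    case True
    have "down_set L \<bottom> = {\<bottom>}" unfolding down_set_def using le_antisym by auto
    then show ?thesis using True unfolding is_chain_def by auto
  next
    case False
    obtain p where pCl: "p \<in> Cl" and px: "covers L p x" using Cl_lower_cover less.prems(1) False by blast
    have pc: "p \<in> carrier L" and "p \<sqsubseteq> x" "p \<noteq> x" using px covers_carrier covers_le by auto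
    then have pc_le: "p \<sqsubseteq> c" using le_trans[of p x c] xc c_carrier less.prems(2) by blast
    have chain_p: "is_chain L (down_set L p)"
      using less.hyps card_down_set_strict_mono[OF pc xc] \<open>p \<sqsubseteq> x\<close> \<open>p \<noteq> x\<close> pCl pc_le by blast
    have unique: "q = p" if qx: "covers L q x" for q
    proof (rule ccontr)
      assume "q \<noteq> p"
      \<comment> \<open>then \<open>p\<close> is not doubly irreducible, and its lower covers are comparable, so it has a second upper cover\<close>
      then have "x \<noteq> c"
        using is_cl px qx unfolding is_cl_def doubly_irreducible_def card_lower_covers_le_1_iff by blast
      then have "p \<noteq> c" using \<open>p \<sqsubseteq> x\<close> less.prems(2) le_antisym[of x c] xc c_carrier by auto
      then have "\<not> doubly_irreducible L p" using not_doubly_irreducible_below_c pCl pc_le by blast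
      moreover have "card {y. covers L y p} \<le> 1"
        unfolding card_lower_covers_le_1_iff using lower_cover_unique_if_down_set_chain[OF chain_p] by blast
      ultimately obtain u v where "covers L p u" "covers L p v" "u \<noteq> v"
        using pc unfolding doubly_irreducible_def card_upper_covers_le_1_iff by blast
      then show False
        using Cl_unique_upper_cover[OF pCl less.prems(1) px qx \<open>q \<noteq> p\<close>] by metis
    qed
    have "down_set L x = insert x (down_set L p)"
      using down_set_unique_lower_cover[OF px] unique by blast
    then show ?thesis
      using chain_p \<open>p \<sqsubseteq> x\<close> xc unfolding is_chain_def down_set_def by auto
  qed
qed

lemma down_set_c_chain: "is_chain L (down_set L c)"
  using Cl_down_set_chain c_in_Cl c_carrier by simp

lemma down_set_c_subset_Cl: "down_set L c \<subseteq> Cl"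
proof
  fix x assume x: "x \<in> down_set L c"
  then have xc: "x \<in> carrier L" and "x \<sqsubseteq> c" unfolding down_set_def by auto
  show "x \<in> Cl" unfolding Cl_iff
  proof (intro conjI ballI notI xc)
    fix y assume yc: "y \<in> carrier L" and lyx: "lam y x"
    have "y \<sqsubseteq> c \<or> lam y c" using left_order_trans[of y x c] yc xc c_carrier lyx \<open>x \<sqsubseteq> c\<close> by auto
    then have "y \<in> down_set L c" using Cl_le_if_left[OF c_in_Cl yc] yc unfolding down_set_def by simp
    then have "y \<sqsubseteq> x \<or> x \<sqsubseteq> y" using down_set_c_chain x unfolding is_chain_def by blast
    then show False using lam_incomparable[OF lyx] by simp
  qed
qed


abbreviation Eo :: "'a set" where
  "Eo \<equiv> carrier L - down_set L c"

lemma Eo_iff: "x \<in> Eo \<longleftrightarrow> x \<in> carrier L \<and> \<not> x \<sqsubseteq> c"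
  unfolding down_set_def by auto

lemma up_closed_Eo: "up_closed Eo"
  unfolding up_closed_def down_set_def using le_trans[of _ _ c] c_carrier by auto

lemma Eo_upward: "x \<in> Eo \<Longrightarrow> z \<in> carrier L \<Longrightarrow> x \<sqsubseteq> z \<Longrightarrow> z \<in> Eo"
  using up_closed_Eo unfolding up_closed_def by blast

lemma top_in_Eo: "\<top> \<in> Eo"
proof -
  have "c \<noteq> \<top>" using c_covered_by_top covers_le by auto
  then show ?thesis
    unfolding Eo_iff using le_antisym[of "\<top>" c] top_higher[OF c_carrier] c_carrier by auto
qed

lemma not_c_le_Eo: "z \<in> Eo \<Longrightarrow> z \<noteq> \<top> \<Longrightarrow> \<not> c \<sqsubseteq> z"
  using coversD[OF c_covered_by_top, of z] Eo_iff by auto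

lemma minimal_Eo_join_irreducible:
  assumes mE: "m \<in> Eo" and min: "\<forall>w\<in>Eo. w \<sqsubseteq> m \<longrightarrow> w = m"
  shows "join_irreducible L m"
proof (rule join_irreducible_if_down_set_chain)
  show mc: "m \<in> carrier L" and "m \<noteq> \<bottom>" using mE Eo_iff c_carrier by auto
  have below: "w = m \<or> w \<in> down_set L c" if "w \<in> down_set L m" for w
    using that min unfolding down_set_def by auto
  show "is_chain L (down_set L m)"
    unfolding is_chain_def
  proof (intro conjI ballI)
    fix a b assume ab: "a \<in> down_set L m" "b \<in> down_set L m"
    then show "a \<sqsubseteq> b \<or> b \<sqsubseteq> a"
      using below[of a] below[of b] down_set_c_chain mc unfolding is_chain_def down_set_def by auto
  qed (auto simp: down_set_def)
qed

lemma minimal_Eo_unique: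
  assumes m1: "m1 \<in> Eo" "\<forall>w\<in>Eo. w \<sqsubseteq> m1 \<longrightarrow> w = m1"
    and m2: "m2 \<in> Eo" "\<forall>w\<in>Eo. w \<sqsubseteq> m2 \<longrightarrow> w = m2"
  shows "m1 = m2"
proof (rule ccontr)
  assume "m1 \<noteq> m2"
  \<comment> \<open>two minimal elements of \<open>Eo\<close>, together with \<open>c\<close>, would be three incomparable join-irreducibles\<close>
  then have "incomparable L m1 m2" using m1 m2 unfolding incomparable_def by blast
  moreover have "m1 \<noteq> \<top>" "m2 \<noteq> \<top>"
    using calculation m1(1) m2(1) top_higher unfolding incomparable_def by auto
  then have "incomparable L m1 c" "incomparable L m2 c"
    using not_c_le_Eo m1(1) m2(1) Eo_iff unfolding incomparable_def by auto
  moreover have "c \<noteq> \<bottom>" using \<open>incomparable L m1 c\<close> m1(1) unfolding incomparable_def by auto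
  then have "join_irreducible L c"
    using join_irreducible_if_down_set_chain c_carrier down_set_c_chain by blast
  moreover have "join_irreducible L m1" "join_irreducible L m2"
    using minimal_Eo_join_irreducible m1 m2 by auto
  ultimately show False
    using slim unfolding slim_def by blast
qed

lemma Eo_has_least:
  obtains e where "e \<in> Eo" "\<And>z. z \<in> Eo \<Longrightarrow> e \<sqsubseteq> z"
proof -
  obtain e where e: "e \<in> Eo" "\<forall>w\<in>Eo. w \<sqsubseteq> e \<longrightarrow> w = e"
    using ex_minimal_below[of Eo \<top>] top_in_Eo by blast
  have "e \<sqsubseteq> z" if "z \<in> Eo" for z
  proof -
    obtain m where m: "m \<in> Eo" "m \<sqsubseteq> z" "\<forall>w\<in>Eo. w \<sqsubseteq> m \<longrightarrow> w = m"
      using ex_minimal_below[of Eo z] \<open>z \<in> Eo\<close> by blast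
    then show ?thesis using minimal_Eo_unique[OF e m(1,3)] by simp
  qed
  then show ?thesis using that e(1) by blast
qed

lemma sublattice_Eo: "sublattice L Eo"
  unfolding sublattice_def
proof (intro conjI ballI)
  obtain e where e: "e \<in> Eo" "\<And>z. z \<in> Eo \<Longrightarrow> e \<sqsubseteq> z" using Eo_has_least by blast
  fix x y assume xy: "x \<in> Eo" "y \<in> Eo"
  then have c: "x \<in> carrier L" "y \<in> carrier L" by auto
  show "x \<squnion> y \<in> Eo"
    using Eo_upward[OF xy(1)] join_left c by simp
  have "e \<sqsubseteq> x \<sqinter> y" using meet_le[of e x y] e xy c by auto
  then show "x \<sqinter> y \<in> Eo"
    using Eo_upward[OF e(1)] c by simp
qed (use top_in_Eo in auto)

lemma planar_diagram_Eo: "planar_diagram (induced_order L Eo) (induced_left lam Eo)"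
  using planar_diagram_induced sublattice_Eo by blast

lemma semimodular_Eo: "semimodular (induced_order L Eo)"
  using semimodular_induced sublattice_Eo up_closed_Eo by blast

lemma covers_Eo_iff: "covers (induced_order L Eo) x y \<longleftrightarrow> x \<in> Eo \<and> y \<in> Eo \<and> covers L x y"
  using covers_induced_iff[OF up_closed_Eo] .

lemma not_Eo_le_down_set_c: "x \<in> Eo \<Longrightarrow> y \<in> down_set L c \<Longrightarrow> \<not> x \<sqsubseteq> y"
  unfolding down_set_def using le_trans[of x y c] c_carrier by auto

sublocale Eo_diagram: diagram "induced_order L Eo" "induced_left lam Eo"
  by unfold_locales (rule planar_diagram_Eo)

lemma meet_c_join_irreducible_incomparable:
  assumes jz: "join_irreducible (induced_order L Eo) z" and nj: "\<not> join_irreducible L z"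
    and wE: "w \<in> Eo" and izw: "incomparable L z w"
  shows "join_irreducible L (c \<sqinter> z) \<and> incomparable L (c \<sqinter> z) w"
proof -
  have zE: "z \<in> Eo" using jz unfolding join_irreducible_def by simp
  have zc: "z \<in> carrier L" and wc: "w \<in> carrier L" using zE wE by auto
  obtain p where pz: "covers (induced_order L Eo) p z"
    and below: "\<And>v. v \<in> Eo \<Longrightarrow> v \<sqsubseteq> z \<Longrightarrow> v \<noteq> z \<Longrightarrow> v \<sqsubseteq> p"
    using Eo_diagram.join_irreducible_lower_cover[OF jz] by auto
  have pE: "p \<in> Eo" and pzL: "covers L p z" using pz covers_Eo_iff by auto
  have pc: "p \<in> carrier L" using pE by auto
  have tc: "c \<sqinter> z \<in> carrier L" using c_carrier zc by simp
  have t_le: "c \<sqinter> z \<sqsubseteq> c" "c \<sqinter> z \<sqsubseteq> z" using meet_left meet_right c_carrier zc by auto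
  have ntw: "\<not> c \<sqinter> z \<sqsubseteq> w"
  proof
    assume tw: "c \<sqinter> z \<sqsubseteq> w"
    \<comment> \<open>then every element strictly below \<open>z\<close> lies below \<open>p\<close>, so \<open>z\<close> would be join-irreducible in \<open>L\<close>\<close>
    have "z \<sqinter> w \<in> Eo" using sublattice_Eo zE wE unfolding sublattice_def by blast
    moreover have "z \<sqinter> w \<noteq> z" using meet_right[OF zc wc] izw unfolding incomparable_def by auto
    ultimately have "z \<sqinter> w \<sqsubseteq> p" using below meet_left[OF zc wc] by blast
    moreover have "c \<sqinter> z \<sqsubseteq> z \<sqinter> w" using meet_le[OF t_le(2) tw] tc zc wc by blast
    ultimately have tp: "c \<sqinter> z \<sqsubseteq> p" using le_trans[of "c \<sqinter> z" "z \<sqinter> w" p] tc zc wc pc by auto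
    have "v \<sqsubseteq> p" if v: "v \<in> carrier L" "v \<sqsubseteq> z" "v \<noteq> z" for v
    proof (cases "v \<in> Eo")
      case False
      then have "v \<sqsubseteq> c \<sqinter> z" using v meet_le c_carrier zc Eo_iff by blast
      then show ?thesis using le_trans[OF _ tp] v tc pc by blast
    qed (use below v in blast)
    then show False using join_irreducible_if_lower_cover_dominates[OF pzL] nj by blast
  qed
  moreover have "\<not> w \<sqsubseteq> c \<sqinter> z" using wE Eo_iff le_trans[OF _ t_le(1)] wc tc c_carrier by blast
  moreover have "join_irreducible L (c \<sqinter> z)"
  proof (rule join_irreducible_if_down_set_chain[OF tc])
    show "c \<sqinter> z \<noteq> \<bottom>" using ntw wc by auto
    have "down_set L (c \<sqinter> z) \<subseteq> down_set L c"
      unfolding down_set_def using le_trans[OF _ t_le(1)] tc c_carrier by blast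
    then show "is_chain L (down_set L (c \<sqinter> z))"
      using down_set_c_chain unfolding is_chain_def by blast
  qed
  ultimately show ?thesis unfolding incomparable_def by blast
qed

definition proxy :: "'a \<Rightarrow> 'a" where
  "proxy z = (if join_irreducible L z then z else c \<sqinter> z)"

lemma proxy_join_irreducible_incomparable:
  assumes jx: "join_irreducible (induced_order L Eo) x" and jy: "join_irreducible (induced_order L Eo) y"
    and ixy: "incomparable L x y"
  shows "join_irreducible L (proxy x) \<and> incomparable L (proxy x) (proxy y)"
proof -
  have xE: "x \<in> Eo" and yE: "y \<in> Eo" using jx jy unfolding join_irreducible_def by auto
  have iyx: "incomparable L y x" using ixy unfolding incomparable_def by blast
  consider "join_irreducible L x" "join_irreducible L y"
    | "\<not> join_irreducible L x" "join_irreducible L y"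
    | "join_irreducible L x" "\<not> join_irreducible L y"
    | "\<not> join_irreducible L x" "\<not> join_irreducible L y" by blast
  then show ?thesis
  proof cases
    case 1
    then show ?thesis using ixy unfolding proxy_def by simp
  next
    case 2
    then show ?thesis using meet_c_join_irreducible_incomparable[OF jx _ yE ixy] unfolding proxy_def by simp
  next
    case 3
    then show ?thesis
      using meet_c_join_irreducible_incomparable[OF jy _ xE iyx] unfolding proxy_def incomparable_def by simp
  next
    case 4
    \<comment> \<open>impossible: \<open>c \<sqinter> x\<close> and \<open>c \<sqinter> y\<close> are comparable, both lying in the chain below \<open>c\<close>\<close>
    have "\<not> c \<sqinter> x \<sqsubseteq> y" "\<not> c \<sqinter> y \<sqsubseteq> x"
      using meet_c_join_irreducible_incomparable[OF jx 4(1) yE ixy]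
        meet_c_join_irreducible_incomparable[OF jy 4(2) xE iyx] unfolding incomparable_def by auto
    moreover have "c \<sqinter> x \<in> down_set L c" "c \<sqinter> y \<in> down_set L c"
      using meet_left c_carrier xE yE unfolding down_set_def by auto
    then have "c \<sqinter> x \<sqsubseteq> c \<sqinter> y \<or> c \<sqinter> y \<sqsubseteq> c \<sqinter> x"
      using down_set_c_chain unfolding is_chain_def by blast
    moreover have "c \<sqinter> x \<sqsubseteq> x" "c \<sqinter> y \<sqsubseteq> y" using meet_right c_carrier xE yE by auto
    ultimately show ?thesis
      using le_trans[of "c \<sqinter> x" "c \<sqinter> y" y] le_trans[of "c \<sqinter> y" "c \<sqinter> x" x] c_carrier xE yE by auto
  qed
qed

lemma slim_Eo: "slim (induced_order L Eo)"
  unfolding slim_def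
proof
  assume "\<exists>x y z. join_irreducible (induced_order L Eo) x \<and> join_irreducible (induced_order L Eo) y \<and>
    join_irreducible (induced_order L Eo) z \<and> incomparable (induced_order L Eo) x y \<and>
    incomparable (induced_order L Eo) y z \<and> incomparable (induced_order L Eo) x z"
  then obtain x y z where j: "join_irreducible (induced_order L Eo) x"
    "join_irreducible (induced_order L Eo) y" "join_irreducible (induced_order L Eo) z"
    and i: "incomparable L x y" "incomparable L y z" "incomparable L x z"
    by auto
  have "incomparable L z x" using i(3) unfolding incomparable_def by blast
  then have "join_irreducible L (proxy x)" "join_irreducible L (proxy y)" "join_irreducible L (proxy z)"
    "incomparable L (proxy x) (proxy y)" "incomparable L (proxy y) (proxy z)"
    "incomparable L (proxy x) (proxy z)"
    using proxy_join_irreducible_incomparable j i by blast+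
  then show False using slim unfolding slim_def by blast
qed

lemma slim_semimodular_diagram_Eo:
  "slim_semimodular_diagram (induced_order L Eo) (induced_left lam Eo)"
  unfolding slim_semimodular_diagram_def using planar_diagram_Eo slim_Eo semimodular_Eo by blast

lemma lattice_length_eq_card_down_set_c: "lattice_length L = card (down_set L c)"
proof -
  have "height_above \<bottom> + 1 \<le> height_above c + card (down_set L c)"
    using height_above_bot_le c_carrier down_set_c_chain by blast
  moreover have "height_above c \<le> height_above \<top> + 1" using height_above_cover[OF c_covered_by_top] .
  ultimately have "height_above \<bottom> \<le> card (down_set L c) + 1" using height_above_top by simp
  moreover have "card (insert \<top> (down_set L c)) \<le> height_above \<bottom>"
  proof (rule card_chain_le_height_above)
    show "is_chain L (insert \<top> (down_set L c))"
      using down_set_c_chain top_higher unfolding is_chain_def down_set_def by auto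
    show "insert \<top> (down_set L c) \<subseteq> up_set \<bottom>" unfolding up_set_def down_set_def by auto
  qed
  then have "card (down_set L c) + 1 \<le> height_above \<bottom>"
    using top_in_Eo finite_down_set by simp
  ultimately show ?thesis using lattice_length_eq_height_above_bot by simp
qed

lemma card_Eo: "card Eo = card (carrier L) - lattice_length L"
proof -
  have "down_set L c \<subseteq> carrier L" unfolding down_set_def by blast
  then show ?thesis
    using card_Diff_subset[OF finite_down_set] lattice_length_eq_card_down_set_c by simp
qed

lemma ex_upper_cover_in_Eo:
  assumes bD: "b \<in> down_set L c"
  shows "\<exists>y\<in>Eo. covers L b y"
proof (cases "b = c")
  case True
  then show ?thesis using c_covered_by_top top_in_Eo by blast
next
  case False
  have bc: "b \<in> carrier L" and "b \<sqsubseteq> c" using bD unfolding down_set_def by auto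
  \<comment> \<open>\<open>b\<close> has a single lower cover but is not doubly irreducible, hence has two upper covers\<close>
  have "down_set L b \<subseteq> down_set L c"
    unfolding down_set_def using le_trans[of _ b c] bc c_carrier \<open>b \<sqsubseteq> c\<close> by auto
  then have "is_chain L (down_set L b)" using down_set_c_chain unfolding is_chain_def by blast
  then have "card {y. covers L y b} \<le> 1"
    unfolding card_lower_covers_le_1_iff using lower_cover_unique_if_down_set_chain by blast
  moreover have "\<not> doubly_irreducible L b"
    using not_doubly_irreducible_below_c bD down_set_c_subset_Cl \<open>b \<sqsubseteq> c\<close> False by blast
  ultimately obtain v1 v2 where v: "covers L b v1" "covers L b v2" "v1 \<noteq> v2"
    using bc unfolding doubly_irreducible_def card_upper_covers_le_1_iff by blast
  obtain u where bu: "covers L b u" and "u \<sqsubseteq> c"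
    using upper_cover_below[OF bc c_carrier \<open>b \<sqsubseteq> c\<close> False] by blast
  then have uD: "u \<in> down_set L c" using covers_carrier unfolding down_set_def by auto
  obtain v where bv: "covers L b v" and "v \<noteq> u" using v by metis
  have "v \<notin> down_set L c"
  proof
    assume "v \<in> down_set L c"
    then have "u \<sqsubseteq> v \<or> v \<sqsubseteq> u" using uD down_set_c_chain unfolding is_chain_def by blast
    then show False using upper_covers_incomparable bu bv \<open>v \<noteq> u\<close> by metis
  qed
  then show ?thesis using bv covers_carrier by blast
qed

lemma upper_cover_in_Eo_unique:
  assumes "b \<in> down_set L c" "y1 \<in> Eo" "y2 \<in> Eo" "covers L b y1" "covers L b y2"
  shows "y1 = y2"
proof (rule ccontr)
  assume "y1 \<noteq> y2"
  then have "y1 \<sqinter> y2 = b" using meet_of_upper_covers assms(4,5) by blast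
  moreover have "y1 \<sqinter> y2 \<in> Eo" using sublattice_Eo assms(2,3) unfolding sublattice_def by blast
  ultimately show False using assms(1) by blast
qed

definition lift :: "'a \<Rightarrow> 'a" where
  "lift b = (THE y. y \<in> Eo \<and> covers L b y)"

lemma lift: "b \<in> down_set L c \<Longrightarrow> lift b \<in> Eo \<and> covers L b (lift b)"
  unfolding lift_def
  using theI'[of "\<lambda>y. y \<in> Eo \<and> covers L b y"] ex_upper_cover_in_Eo upper_cover_in_Eo_unique by blast

lemma lift_c: "lift c = \<top>"
proof -
  have "c \<in> down_set L c" using c_carrier unfolding down_set_def by simp
  then show ?thesis using lift upper_cover_in_Eo_unique c_covered_by_top top_in_Eo by blast
qed

lemma le_iff_lift_le:
  assumes bD: "b \<in> down_set L c" and zE: "z \<in> Eo"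
  shows "b \<sqsubseteq> z \<longleftrightarrow> lift b \<sqsubseteq> z"
proof
  have bc: "b \<in> carrier L" using bD unfolding down_set_def by auto
  have zc: "z \<in> carrier L" using zE by auto
  have yE: "lift b \<in> Eo" and by_cov: "covers L b (lift b)" using lift[OF bD] by auto
  have yc: "lift b \<in> carrier L" using yE by auto
  assume bz: "b \<sqsubseteq> z"
  have "b \<sqsubseteq> lift b \<sqinter> z" using meet_le[OF _ bz] by_cov covers_le yc zc bc by blast
  moreover have "lift b \<sqinter> z \<sqsubseteq> lift b" using meet_left[OF yc zc] .
  moreover have "lift b \<sqinter> z \<in> Eo" using sublattice_Eo yE zE unfolding sublattice_def by blast
  ultimately have "lift b \<sqinter> z = lift b" using coversD[OF by_cov, of "lift b \<sqinter> z"] bD yc zc by auto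
  then show "lift b \<sqsubseteq> z" using meet_right[OF yc zc] by simp
next
  have bc: "b \<in> carrier L" using bD unfolding down_set_def by auto
  assume "lift b \<sqsubseteq> z"
  then show "b \<sqsubseteq> z"
    using le_trans[of b "lift b" z] lift[OF bD] covers_le covers_carrier bc zE by auto
qed

lemma lift_le_iff:
  assumes b1: "b1 \<in> down_set L c" and b2: "b2 \<in> down_set L c"
  shows "lift b1 \<sqsubseteq> lift b2 \<longleftrightarrow> b1 \<sqsubseteq> b2"
proof
  have c: "b1 \<in> carrier L" "b2 \<in> carrier L" using b1 b2 unfolding down_set_def by auto
  assume "b1 \<sqsubseteq> b2"
  then have "b1 \<sqsubseteq> lift b2" using le_trans[of b1 b2 "lift b2"] lift[OF b2] covers_le covers_carrier c by auto
  then show "lift b1 \<sqsubseteq> lift b2" using le_iff_lift_le[OF b1] lift[OF b2] by blast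
next
  have c: "b1 \<in> carrier L" "b2 \<in> carrier L" using b1 b2 unfolding down_set_def by auto
  assume l: "lift b1 \<sqsubseteq> lift b2"
  show "b1 \<sqsubseteq> b2"
  proof (rule ccontr)
    assume n: "\<not> b1 \<sqsubseteq> b2"
    then have "b2 \<sqsubseteq> b1" using b1 b2 down_set_c_chain unfolding is_chain_def by blast
    then have "b2 \<sqsubseteq> lift b1" using le_trans[of b2 b1 "lift b1"] lift[OF b1] covers_le covers_carrier c by auto
    then have "lift b2 \<sqsubseteq> lift b1" using le_iff_lift_le[OF b2] lift[OF b1] by blast
    then have "lift b1 = lift b2" using l le_antisym lift[OF b1] lift[OF b2] covers_carrier by blast
    then have "b1 \<sqsubseteq> lift b2" using lift[OF b1] covers_le by metis
    then have "b1 = b2 \<or> b1 = lift b2" using coversD[OF _ _ \<open>b2 \<sqsubseteq> b1\<close>] lift[OF b2] c by blast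
    then show False using n lift[OF b2] b1 c le_refl by auto
  qed
qed

lemma inj_on_lift: "inj_on lift (down_set L c)"
proof (rule inj_onI)
  fix b1 b2 assume b: "b1 \<in> down_set L c" "b2 \<in> down_set L c" and "lift b1 = lift b2"
  then have "b1 \<sqsubseteq> b2" "b2 \<sqsubseteq> b1" using lift_le_iff lift covers_carrier le_refl by metis+
  then show "b1 = b2" using le_antisym b unfolding down_set_def by auto
qed

lemma lift_in_Eo_Cl: "b \<in> down_set L c \<Longrightarrow> lift b \<in> Eo_diagram.Cl"
  unfolding Eo_diagram.Cl_iff
proof (intro conjI ballI notI)
  assume bD: "b \<in> down_set L c"
  then show "lift b \<in> carrier (induced_order L Eo)" using lift by simp
  have bc: "b \<in> carrier L" and "b \<sqsubseteq> c" using bD unfolding down_set_def by auto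
  have y: "lift b \<in> Eo" "covers L b (lift b)" using lift[OF bD] by auto
  fix w assume "w \<in> carrier (induced_order L Eo)" and lw: "induced_left lam Eo w (lift b)"
  then have wE: "w \<in> Eo" and lwy: "lam w (lift b)" unfolding induced_left_def by auto
  have wc: "w \<in> carrier L" and yc: "lift b \<in> carrier L" using wE y by auto
  have "\<not> b \<sqsubseteq> w" using le_iff_lift_le[OF bD wE] lam_incomparable[OF lwy] by simp
  moreover have "\<not> w \<sqsubseteq> b" using le_trans[of w b c] \<open>b \<sqsubseteq> c\<close> wE Eo_iff bc c_carrier by auto
  ultimately have "lam b w" using Cl_lam down_set_c_subset_Cl bD wc by blast
  then have "w \<sqsubseteq> lift b \<or> lam (lift b) w"
    using right_order_trans[of w b "lift b"] wc bc yc y covers_le by auto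
  then show False using lam_incomparable[OF lwy] lam_asym[OF lwy] by simp
qed

lemma lift_covers:
  assumes bD: "b \<in> down_set L c" and b'D: "b' \<in> down_set L c" and bb': "covers L b b'"
  shows "covers L (lift b) (lift b')"
proof -
  have bc: "b \<in> carrier L" and b'c: "b' \<in> carrier L" and "b \<sqsubseteq> b'" using bb' covers_carrier covers_le by auto
  have y: "lift b \<in> Eo" "covers L b (lift b)" and y': "lift b' \<in> Eo" "covers L b' (lift b')"
    using lift bD b'D by auto
  have yc: "lift b \<in> carrier L" "lift b' \<in> carrier L" using y y' by auto
  \<comment> \<open>semimodularity applied to the covering pair \<open>b \<prec> b'\<close> and \<open>lift b\<close>\<close>
  have "b \<sqsubseteq> b' \<sqinter> lift b"
    using meet_le[of b b' "lift b"] \<open>b \<sqsubseteq> b'\<close> covers_le[OF y(2)] b'c yc bc by simp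
  moreover have "b' \<sqinter> lift b \<sqsubseteq> b'" using meet_left b'c yc by simp
  moreover have "b' \<sqinter> lift b \<noteq> b'"
  proof
    assume "b' \<sqinter> lift b = b'"
    then have "b' \<sqsubseteq> lift b" using meet_right[of b' "lift b"] b'c yc by simp
    then have "b' = b \<or> b' = lift b" using coversD[OF y(2) b'c \<open>b \<sqsubseteq> b'\<close>] by simp
    then show False using bb' covers_le b'D y(1) by auto
  qed
  ultimately have "b' \<sqinter> lift b = b" using coversD[OF bb', of "b' \<sqinter> lift b"] b'c yc by auto
  then have "covers L (lift b) (b' \<squnion> lift b)" using semimodularD[of b' "lift b"] bb' b'c yc by simp
  moreover have "b' \<squnion> lift b = lift b'"
  proof (rule le_antisym)
    have "b' \<squnion> lift b \<in> Eo" using Eo_upward[OF y(1)] join_right b'c yc by simp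
    then show "lift b' \<sqsubseteq> b' \<squnion> lift b"
      using le_iff_lift_le[OF b'D] join_left[of b' "lift b"] b'c yc by simp
    have "lift b \<sqsubseteq> lift b'" using lift_le_iff[OF bD b'D] \<open>b \<sqsubseteq> b'\<close> by simp
    then show "b' \<squnion> lift b \<sqsubseteq> lift b'"
      using join_le[of b' "lift b'" "lift b"] covers_le[OF y'(2)] b'c yc by simp
  qed (use b'c yc in simp_all)
  ultimately show ?thesis by simp
qed

lemma Eo_Cl_subset_lift_image:
  assumes wCl: "w \<in> Eo_diagram.Cl"
  shows "\<exists>b\<in>down_set L c. lift b = w"
proof -
  have wE: "w \<in> Eo" using wCl Eo_diagram.Cl_iff by simp
  have wc: "w \<in> carrier L" using wE by auto
  let ?A = "{b \<in> down_set L c. lift b \<sqsubseteq> w}"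
  have botD: "\<bottom> \<in> down_set L c" using c_carrier unfolding down_set_def by simp
  then have "\<bottom> \<in> ?A" using le_iff_lift_le[OF botD wE] wc by simp
  then obtain b where bA: "b \<in> ?A" and bmax: "\<forall>a\<in>?A. b \<sqsubseteq> a \<longrightarrow> a = b"
    using ex_maximal_above[of ?A "\<bottom>"] unfolding down_set_def by auto
  have bD: "b \<in> down_set L c" and ybw: "lift b \<sqsubseteq> w" using bA by auto
  have bc: "b \<in> carrier L" and "b \<sqsubseteq> c" using bD unfolding down_set_def by auto
  show ?thesis
  proof (cases "b = c")
    case True
    then have "w = \<top>" using ybw lift_c le_antisym top_higher wc by auto
    then show ?thesis using True lift_c bD by auto
  next
    case False
    obtain b' where bb': "covers L b b'" and "b' \<sqsubseteq> c"
      using upper_cover_below[OF bc c_carrier \<open>b \<sqsubseteq> c\<close> False] by blast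
    then have b'D: "b' \<in> down_set L c" using covers_carrier unfolding down_set_def by auto
    have "\<not> lift b' \<sqsubseteq> w" using bmax b'D covers_le[OF bb'] by auto
    moreover have "lift b' \<in> Eo_diagram.Cl" using lift_in_Eo_Cl[OF b'D] .
    then have "w \<sqsubseteq> lift b' \<or> lift b' \<sqsubseteq> w" using Eo_diagram.Cl_chain[OF wCl] by simp
    ultimately have "w \<sqsubseteq> lift b'" by simp
    then have "w = lift b \<or> w = lift b'" using coversD[OF lift_covers[OF bD b'D bb'] wc ybw] by simp
    then show ?thesis using \<open>\<not> lift b' \<sqsubseteq> w\<close> wc bD by auto
  qed
qed

lemma bij_betw_lift: "bij_betw lift (down_set L c) Eo_diagram.Cl"
  unfolding bij_betw_def using inj_on_lift lift_in_Eo_Cl Eo_Cl_subset_lift_image by blast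

end

section \<open>Similarity\<close>

definition similarity_map ::
  "'a gorder \<Rightarrow> ('a \<Rightarrow> 'a \<Rightarrow> bool) \<Rightarrow> 'b gorder \<Rightarrow> ('b \<Rightarrow> 'b \<Rightarrow> bool) \<Rightarrow> ('a \<Rightarrow> 'b) \<Rightarrow> bool" where
  "similarity_map L lam L' lam' \<phi> \<longleftrightarrow> bij_betw \<phi> (carrier L) (carrier L') \<and>
     (\<forall>x\<in>carrier L. \<forall>y\<in>carrier L. x \<sqsubseteq>\<^bsub>L\<^esub> y \<longleftrightarrow> \<phi> x \<sqsubseteq>\<^bsub>L'\<^esub> \<phi> y) \<and>
     (\<forall>x y z. covers L x y \<and> covers L x z \<longrightarrow> (lam y z \<longleftrightarrow> lam' (\<phi> y) (\<phi> z))) \<and>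
     (\<forall>x y z. covers L y x \<and> covers L z x \<longrightarrow> (lam y z \<longleftrightarrow> lam' (\<phi> y) (\<phi> z)))"

lemma similar_iff_ex_similarity_map: "similar L lam L' lam' \<longleftrightarrow> (\<exists>\<phi>. similarity_map L lam L' lam' \<phi>)"
  unfolding similar_def similarity_map_def by simp

lemma similarity_map_covers_iff:
  assumes D1: "diagram L1 lam1" and D2: "diagram L2 lam2" and sim: "similarity_map L1 lam1 L2 lam2 \<phi>"
    and xy: "x \<in> carrier L1" "y \<in> carrier L1"
  shows "covers L2 (\<phi> x) (\<phi> y) \<longleftrightarrow> covers L1 x y"
proof -
  interpret D1: diagram L1 lam1 by (rule D1)
  interpret D2: diagram L2 lam2 by (rule D2)
  have bij: "bij_betw \<phi> (carrier L1) (carrier L2)"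
    and ord: "\<And>x y. x \<in> carrier L1 \<Longrightarrow> y \<in> carrier L1 \<Longrightarrow> x \<sqsubseteq>\<^bsub>L1\<^esub> y \<longleftrightarrow> \<phi> x \<sqsubseteq>\<^bsub>L2\<^esub> \<phi> y"
    using sim unfolding similarity_map_def by auto
  have inj: "\<And>x y. x \<in> carrier L1 \<Longrightarrow> y \<in> carrier L1 \<Longrightarrow> \<phi> x = \<phi> y \<longleftrightarrow> x = y"
    using bij unfolding bij_betw_def inj_on_def by auto
  have onto: "carrier L2 = \<phi> ` carrier L1" using bij unfolding bij_betw_def by simp
  have "covers L1 x y \<longleftrightarrow> x \<sqsubseteq>\<^bsub>L1\<^esub> y \<and> x \<noteq> y \<and>
      (\<forall>z\<in>carrier L1. x \<sqsubseteq>\<^bsub>L1\<^esub> z \<longrightarrow> z \<sqsubseteq>\<^bsub>L1\<^esub> y \<longrightarrow> z = x \<or> z = y)"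
    using D1.covers_iff xy by simp
  also have "\<dots> \<longleftrightarrow> \<phi> x \<sqsubseteq>\<^bsub>L2\<^esub> \<phi> y \<and> \<phi> x \<noteq> \<phi> y \<and>
      (\<forall>z\<in>carrier L1. \<phi> x \<sqsubseteq>\<^bsub>L2\<^esub> \<phi> z \<longrightarrow> \<phi> z \<sqsubseteq>\<^bsub>L2\<^esub> \<phi> y \<longrightarrow> \<phi> z = \<phi> x \<or> \<phi> z = \<phi> y)"
    using ord inj xy by auto
  also have "\<dots> \<longleftrightarrow> covers L2 (\<phi> x) (\<phi> y)"
    using D2.covers_iff onto xy by auto
  finally show ?thesis by simp
qed

lemma similarity_map_bot:
  assumes D1: "diagram L1 lam1" and D2: "diagram L2 lam2" and sim: "similarity_map L1 lam1 L2 lam2 \<phi>"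
  shows "\<phi> \<bottom>\<^bsub>L1\<^esub> = \<bottom>\<^bsub>L2\<^esub>"
proof -
  interpret D1: diagram L1 lam1 by (rule D1)
  interpret D2: diagram L2 lam2 by (rule D2)
  have bij: "bij_betw \<phi> (carrier L1) (carrier L2)"
    and ord: "\<And>x y. x \<in> carrier L1 \<Longrightarrow> y \<in> carrier L1 \<Longrightarrow> x \<sqsubseteq>\<^bsub>L1\<^esub> y \<longleftrightarrow> \<phi> x \<sqsubseteq>\<^bsub>L2\<^esub> \<phi> y"
    using sim unfolding similarity_map_def by auto
  show ?thesis
  proof (rule D2.bottom_eq)
    show "\<phi> \<bottom>\<^bsub>L1\<^esub> \<in> carrier L2" using bij bij_betwE D1.bottom_closed by blast
    fix x assume "x \<in> carrier L2"
    then obtain w where "w \<in> carrier L1" "x = \<phi> w" using bij unfolding bij_betw_def by auto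
    then show "\<phi> \<bottom>\<^bsub>L1\<^esub> \<sqsubseteq>\<^bsub>L2\<^esub> x" using ord[OF D1.bottom_closed] D1.bottom_lower by simp
  qed
qed

lemma similarity_map_Cl:
  assumes D1: "diagram L1 lam1" and D2: "diagram L2 lam2" and sim: "similarity_map L1 lam1 L2 lam2 \<phi>"
  shows "x \<in> left_boundary L1 lam1 \<Longrightarrow> \<phi> x \<in> left_boundary L2 lam2"
proof (induction "card (down_set L1 x)" arbitrary: x rule: less_induct)
  case less
  interpret D1: diagram L1 lam1 by (rule D1)
  interpret D2: diagram L2 lam2 by (rule D2)
  have bij: "bij_betw \<phi> (carrier L1) (carrier L2)"
    and lam_up: "\<And>x y z. covers L1 x y \<Longrightarrow> covers L1 x z \<Longrightarrow> lam1 y z \<longleftrightarrow> lam2 (\<phi> y) (\<phi> z)"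
    using sim unfolding similarity_map_def by auto
  have xc: "x \<in> carrier L1" using less.prems D1.Cl_iff by simp
  show ?case
  proof (cases "x = \<bottom>\<^bsub>L1\<^esub>")
    case True
    then show ?thesis using similarity_map_bot[OF D1 D2 sim] D2.bot_in_Cl by simp
  next
    case False
    \<comment> \<open>\<open>\<phi> x\<close> is the leftmost upper cover of the image of a left-boundary lower cover of \<open>x\<close>\<close>
    obtain p where pCl: "p \<in> left_boundary L1 lam1" and px: "covers L1 p x"
      using D1.Cl_lower_cover[OF less.prems False] by blast
    have pc: "p \<in> carrier L1" using px D1.covers_carrier by auto
    have "card (down_set L1 p) < card (down_set L1 x)"
      using D1.card_down_set_strict_mono[OF pc xc] px D1.covers_le by simp
    then have IH: "\<phi> p \<in> left_boundary L2 lam2" using less.hyps pCl by blast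
    have cpx: "covers L2 (\<phi> p) (\<phi> x)" using similarity_map_covers_iff[OF D1 D2 sim pc xc] px by simp
    show ?thesis
    proof (rule D2.Cl_leftmost_upper_cover[OF IH cpx])
      fix v' assume pv': "covers L2 (\<phi> p) v'" and "v' \<noteq> \<phi> x"
      have "v' \<in> \<phi> ` carrier L1" using pv' D2.covers_carrier bij unfolding bij_betw_def by blast
      then obtain v where vc: "v \<in> carrier L1" and v': "v' = \<phi> v" by blast
      have pv: "covers L1 p v" using similarity_map_covers_iff[OF D1 D2 sim pc vc] pv' v' by simp
      have "v \<noteq> x" using \<open>v' \<noteq> \<phi> x\<close> v' by auto
      then have "\<not> x \<sqsubseteq>\<^bsub>L1\<^esub> v" "\<not> v \<sqsubseteq>\<^bsub>L1\<^esub> x"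
        using D1.upper_covers_incomparable[OF px pv] D1.upper_covers_incomparable[OF pv px] by auto
      then have "lam1 x v" using D1.Cl_lam[OF less.prems vc] by simp
      then show "lam2 (\<phi> x) v'" using lam_up[OF px pv] v' by simp
    qed
  qed
qed

lemma similarity_map_inv:
  assumes D1: "diagram L1 lam1" and D2: "diagram L2 lam2" and sim: "similarity_map L1 lam1 L2 lam2 \<phi>"
  shows "similarity_map L2 lam2 L1 lam1 (the_inv_into (carrier L1) \<phi>)"
proof -
  interpret D1: diagram L1 lam1 by (rule D1)
  interpret D2: diagram L2 lam2 by (rule D2)
  let ?\<psi> = "the_inv_into (carrier L1) \<phi>"
  have bij: "bij_betw \<phi> (carrier L1) (carrier L2)"
    and ord: "\<And>x y. x \<in> carrier L1 \<Longrightarrow> y \<in> carrier L1 \<Longrightarrow> x \<sqsubseteq>\<^bsub>L1\<^esub> y \<longleftrightarrow> \<phi> x \<sqsubseteq>\<^bsub>L2\<^esub> \<phi> y"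
    and lam_up: "\<And>x y z. covers L1 x y \<Longrightarrow> covers L1 x z \<Longrightarrow> lam1 y z \<longleftrightarrow> lam2 (\<phi> y) (\<phi> z)"
    and lam_down: "\<And>x y z. covers L1 y x \<Longrightarrow> covers L1 z x \<Longrightarrow> lam1 y z \<longleftrightarrow> lam2 (\<phi> y) (\<phi> z)"
    using sim unfolding similarity_map_def by auto
  have bij2: "bij_betw ?\<psi> (carrier L2) (carrier L1)" using bij_betw_the_inv_into[OF bij] .
  have \<psi>c: "\<And>x. x \<in> carrier L2 \<Longrightarrow> ?\<psi> x \<in> carrier L1" using bij2 bij_betwE by metis
  have \<phi>\<psi>: "\<And>x. x \<in> carrier L2 \<Longrightarrow> \<phi> (?\<psi> x) = x" using f_the_inv_into_f_bij_betw[OF bij] by simp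
  have cov: "\<And>x y. x \<in> carrier L2 \<Longrightarrow> y \<in> carrier L2 \<Longrightarrow> covers L2 x y \<longleftrightarrow> covers L1 (?\<psi> x) (?\<psi> y)"
    using similarity_map_covers_iff[OF D1 D2 sim] \<psi>c \<phi>\<psi> by metis
  have "\<forall>x\<in>carrier L2. \<forall>y\<in>carrier L2. x \<sqsubseteq>\<^bsub>L2\<^esub> y \<longleftrightarrow> ?\<psi> x \<sqsubseteq>\<^bsub>L1\<^esub> ?\<psi> y"
    using ord \<psi>c \<phi>\<psi> by metis
  moreover have "\<forall>x y z. covers L2 x y \<and> covers L2 x z \<longrightarrow> (lam2 y z \<longleftrightarrow> lam1 (?\<psi> y) (?\<psi> z))"
    using lam_up cov \<phi>\<psi> D2.covers_carrier by metis
  moreover have "\<forall>x y z. covers L2 y x \<and> covers L2 z x \<longrightarrow> (lam2 y z \<longleftrightarrow> lam1 (?\<psi> y) (?\<psi> z))"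
    using lam_down cov \<phi>\<psi> D2.covers_carrier by metis
  ultimately show ?thesis unfolding similarity_map_def using bij2 by blast
qed

lemma similarity_map_image_Cl:
  assumes D1: "diagram L1 lam1" and D2: "diagram L2 lam2" and sim: "similarity_map L1 lam1 L2 lam2 \<phi>"
  shows "\<phi> ` left_boundary L1 lam1 = left_boundary L2 lam2"
proof
  show "\<phi> ` left_boundary L1 lam1 \<subseteq> left_boundary L2 lam2"
    using similarity_map_Cl[OF D1 D2 sim] by blast
  have bij: "bij_betw \<phi> (carrier L1) (carrier L2)" using sim unfolding similarity_map_def by blast
  show "left_boundary L2 lam2 \<subseteq> \<phi> ` left_boundary L1 lam1"
  proof
    fix y assume y: "y \<in> left_boundary L2 lam2"
    then have yc: "y \<in> carrier L2" unfolding left_boundary_def by blast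
    have "the_inv_into (carrier L1) \<phi> y \<in> left_boundary L1 lam1"
      using similarity_map_Cl[OF D2 D1 similarity_map_inv[OF D1 D2 sim] y] .
    moreover have "\<phi> (the_inv_into (carrier L1) \<phi> y) = y"
      using f_the_inv_into_f_bij_betw[OF bij yc] .
    ultimately show "y \<in> \<phi> ` left_boundary L1 lam1" by force
  qed
qed

locale cl_coatom_pair =
  A: cl_coatom L lam c + B: cl_coatom L' lam' c'
  for L :: "'a gorder" and lam c and L' :: "'b gorder" and lam' c' +
  fixes \<phi> :: "'a \<Rightarrow> 'b"
  assumes similarity_Eo:
    "similarity_map (induced_order L (carrier L - down_set L c)) (induced_left lam (carrier L - down_set L c))
       (induced_order L' (carrier L' - down_set L' c')) (induced_left lam' (carrier L' - down_set L' c')) \<phi>"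
begin

lemma bij_betw_phi_Eo: "bij_betw \<phi> A.Eo B.Eo"
  using similarity_Eo unfolding similarity_map_def by simp

lemma phi_le_iff: "x \<in> A.Eo \<Longrightarrow> y \<in> A.Eo \<Longrightarrow> \<phi> x \<sqsubseteq>\<^bsub>L'\<^esub> \<phi> y \<longleftrightarrow> x \<sqsubseteq>\<^bsub>L\<^esub> y"
  using similarity_Eo unfolding similarity_map_def by simp

lemma bij_betw_phi_Eo_Cl: "bij_betw \<phi> A.Eo_diagram.Cl B.Eo_diagram.Cl"
proof -
  have "diagram (induced_order L A.Eo) (induced_left lam A.Eo)"
    "diagram (induced_order L' B.Eo) (induced_left lam' B.Eo)"
    using A.planar_diagram_Eo B.planar_diagram_Eo by (simp_all add: diagram_def)
  then have "\<phi> ` A.Eo_diagram.Cl = B.Eo_diagram.Cl"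
    using similarity_map_image_Cl similarity_Eo by blast
  moreover have "A.Eo_diagram.Cl \<subseteq> A.Eo" using A.Eo_diagram.Cl_iff by auto
  then have "inj_on \<phi> A.Eo_diagram.Cl"
    using bij_betw_phi_Eo inj_on_subset unfolding bij_betw_def by blast
  ultimately show ?thesis unfolding bij_betw_def by blast
qed

definition extension :: "'a \<Rightarrow> 'b" where
  "extension x = (if x \<in> down_set L c then the_inv_into (down_set L' c') B.lift (\<phi> (A.lift x)) else \<phi> x)"

lemma extension_Eo: "x \<in> A.Eo \<Longrightarrow> extension x = \<phi> x"
  unfolding extension_def by simp

lemma bij_betw_extension_down_set: "bij_betw extension (down_set L c) (down_set L' c')"
proof -
  have "bij_betw (the_inv_into (down_set L' c') B.lift \<circ> (\<phi> \<circ> A.lift)) (down_set L c) (down_set L' c')"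
    using A.bij_betw_lift bij_betw_phi_Eo_Cl bij_betw_the_inv_into[OF B.bij_betw_lift]
    by (blast intro: bij_betw_trans)
  then show ?thesis by (rule bij_betw_cong[THEN iffD1, rotated]) (simp add: extension_def)
qed

lemma extension_down_set:
  assumes "x \<in> down_set L c"
  shows "extension x \<in> down_set L' c'" "B.lift (extension x) = \<phi> (A.lift x)"
proof -
  show "extension x \<in> down_set L' c'" using bij_betw_extension_down_set assms bij_betwE by blast
  have "\<phi> (A.lift x) \<in> B.Eo_diagram.Cl" using A.lift_in_Eo_Cl assms bij_betw_phi_Eo_Cl bij_betwE by blast
  then show "B.lift (extension x) = \<phi> (A.lift x)"
    using f_the_inv_into_f_bij_betw[OF B.bij_betw_lift] assms unfolding extension_def by simp
qed

lemma bij_betw_extension: "bij_betw extension (carrier L) (carrier L')"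
proof -
  have "bij_betw extension A.Eo B.Eo"
    using bij_betw_cong[of A.Eo extension \<phi>] bij_betw_phi_Eo extension_Eo by blast
  then have "bij_betw extension (down_set L c \<union> A.Eo) (down_set L' c' \<union> B.Eo)"
    using bij_betw_combine[OF bij_betw_extension_down_set] by blast
  moreover have "down_set L c \<union> A.Eo = carrier L" "down_set L' c' \<union> B.Eo = carrier L'"
    unfolding down_set_def by auto
  ultimately show ?thesis by simp
qed

lemma extension_le_iff:
  assumes x: "x \<in> carrier L" and y: "y \<in> carrier L"
  shows "extension x \<sqsubseteq>\<^bsub>L'\<^esub> extension y \<longleftrightarrow> x \<sqsubseteq>\<^bsub>L\<^esub> y"
proof (cases "x \<in> down_set L c")
  case xD: True
  note x' = extension_down_set[OF xD]
  show ?thesis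
  proof (cases "y \<in> down_set L c")
    case yD: True
    note y' = extension_down_set[OF yD]
    have "extension x \<sqsubseteq>\<^bsub>L'\<^esub> extension y \<longleftrightarrow> \<phi> (A.lift x) \<sqsubseteq>\<^bsub>L'\<^esub> \<phi> (A.lift y)"
      using B.lift_le_iff x' y' by metis
    also have "\<dots> \<longleftrightarrow> x \<sqsubseteq>\<^bsub>L\<^esub> y" using phi_le_iff A.lift A.lift_le_iff xD yD by metis
    finally show ?thesis .
  next
    case yD: False
    then have yE: "y \<in> A.Eo" using y by simp
    have "extension x \<sqsubseteq>\<^bsub>L'\<^esub> extension y \<longleftrightarrow> \<phi> (A.lift x) \<sqsubseteq>\<^bsub>L'\<^esub> \<phi> y"
      using B.le_iff_lift_le[OF x'(1)] x'(2) bij_betw_phi_Eo yE extension_Eo bij_betwE by metis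
    also have "\<dots> \<longleftrightarrow> x \<sqsubseteq>\<^bsub>L\<^esub> y" using phi_le_iff A.lift A.le_iff_lift_le xD yE by metis
    finally show ?thesis .
  qed
next
  case xD: False
  then have xE: "x \<in> A.Eo" using x by simp
  show ?thesis
  proof (cases "y \<in> down_set L c")
    case yD: True
    have "\<phi> x \<in> B.Eo" using bij_betw_phi_Eo xE bij_betwE by blast
    then show ?thesis
      using A.not_Eo_le_down_set_c[OF xE yD] B.not_Eo_le_down_set_c extension_down_set(1)[OF yD]
        extension_Eo[OF xE] by simp
  next
    case False
    then show ?thesis using phi_le_iff extension_Eo xE y by simp
  qed
qed

lemma extension_lam_incomparable_down_set:
  assumes yz: "y \<in> carrier L" "z \<in> carrier L" "\<not> y \<sqsubseteq>\<^bsub>L\<^esub> z" "\<not> z \<sqsubseteq>\<^bsub>L\<^esub> y"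
    and D: "y \<in> down_set L c \<or> z \<in> down_set L c"
  shows "lam y z \<longleftrightarrow> lam' (extension y) (extension z)"
proof -
  \<comment> \<open>an element of the chain below \<open>c\<close> lies on the left boundary, so it is left of everything incomparable\<close>
  have i': "\<not> extension y \<sqsubseteq>\<^bsub>L'\<^esub> extension z" "\<not> extension z \<sqsubseteq>\<^bsub>L'\<^esub> extension y"
    using extension_le_iff yz by auto
  have c': "extension y \<in> carrier L'" "extension z \<in> carrier L'"
    using bij_betw_extension yz bij_betwE by blast+
  have "lam y z \<and> lam' (extension y) (extension z)" if "y \<in> down_set L c"
    using A.Cl_lam[OF _ yz(2,3,4)] B.Cl_lam[OF _ c'(2) i'] that extension_down_set(1)
      A.down_set_c_subset_Cl B.down_set_c_subset_Cl by blast
  moreover have "lam z y \<and> lam' (extension z) (extension y)" if "z \<in> down_set L c"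
    using A.Cl_lam[OF _ yz(1,4,3)] B.Cl_lam[OF _ c'(1) i'(2,1)] that extension_down_set(1)
      A.down_set_c_subset_Cl B.down_set_c_subset_Cl by blast
  ultimately show ?thesis using D A.lam_asym B.lam_asym by blast
qed

lemma extension_lam_covers:
  assumes cov: "covers L x y \<and> covers L x z \<or> covers L y x \<and> covers L z x"
  shows "lam y z \<longleftrightarrow> lam' (extension y) (extension z)"
proof (cases "y = z")
  case True
  then show ?thesis using A.lam_irrefl B.lam_irrefl by simp
next
  case False
  have c: "x \<in> carrier L" "y \<in> carrier L" "z \<in> carrier L" using cov A.covers_carrier by blast+
  have i: "\<not> y \<sqsubseteq>\<^bsub>L\<^esub> z" "\<not> z \<sqsubseteq>\<^bsub>L\<^esub> y"
    using cov False A.upper_covers_incomparable A.lower_covers_incomparable by metis+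
  show ?thesis
  proof (cases "y \<in> down_set L c \<or> z \<in> down_set L c")
    case True
    then show ?thesis using extension_lam_incomparable_down_set c i by blast
  next
    case yzE: False
    \<comment> \<open>two distinct upper covers of an element below \<open>c\<close> cannot both lie in \<open>Eo\<close>\<close>
    have "x \<in> A.Eo"
      using cov yzE c False A.upper_cover_in_Eo_unique A.Eo_upward A.covers_le by blast
    then have "covers (induced_order L A.Eo) x y \<and> covers (induced_order L A.Eo) x z \<or>
        covers (induced_order L A.Eo) y x \<and> covers (induced_order L A.Eo) z x"
      using cov yzE c A.covers_Eo_iff by auto
    then have "induced_left lam A.Eo y z \<longleftrightarrow> induced_left lam' B.Eo (\<phi> y) (\<phi> z)"
      using similarity_Eo unfolding similarity_map_def by blast
    moreover have "\<phi> y \<in> B.Eo" "\<phi> z \<in> B.Eo" using bij_betw_phi_Eo yzE c bij_betwE by blast+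
    ultimately show ?thesis using yzE c extension_Eo unfolding induced_left_def by simp
  qed
qed

lemma similarity_map_extension: "similarity_map L lam L' lam' extension"
  unfolding similarity_map_def
  using bij_betw_extension extension_le_iff extension_lam_covers by blast

end

theorem mainTheorem5:
  fixes L :: "'a gorder" and lam :: "'a \<Rightarrow> 'a \<Rightarrow> bool" and c :: 'a
  assumes ssd: "slim_semimodular_diagram L lam"
    and cl: "is_cl L lam c"
    and coat: "coatom L c"
  shows "is_chain L (down_set L c) \<and> down_set L c \<subseteq> left_boundary L lam \<and>
    sublattice L (carrier L - down_set L c) \<and>
    slim_semimodular_diagram (induced_order L (carrier L - down_set L c))
                             (induced_left lam (carrier L - down_set L c)) \<and>
    card (carrier L - down_set L c) = card (carrier L) - lattice_length L \<and>
    (\<forall>(L' :: 'b gorder) lam' c'.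
       slim_semimodular_diagram L' lam' \<and> is_cl L' lam' c' \<and> coatom L' c' \<and>
       similar (induced_order L (carrier L - down_set L c)) (induced_left lam (carrier L - down_set L c))
               (induced_order L' (carrier L' - down_set L' c')) (induced_left lam' (carrier L' - down_set L' c'))
       \<longrightarrow> similar L lam L' lam')"
proof -
  have cl_coatom: "cl_coatom L lam c" if "slim_semimodular_diagram L lam" "is_cl L lam c" "coatom L c"
    for L :: "'c gorder" and lam c
    using that unfolding slim_semimodular_diagram_def cl_coatom_def cl_coatom_axioms_def
      slim_semimodular_def slim_semimodular_axioms_def diagram_def by blast
  interpret A: cl_coatom L lam c using cl_coatom ssd cl coat .
  have "similar L lam L' lam'"
    if B: "slim_semimodular_diagram L' lam'" "is_cl L' lam' c'" "coatom L' c'"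
      and sim: "similar (induced_order L A.Eo) (induced_left lam A.Eo)
         (induced_order L' (carrier L' - down_set L' c')) (induced_left lam' (carrier L' - down_set L' c'))"
    for L' :: "'b gorder" and lam' c'
  proof -
    obtain \<phi> where "similarity_map (induced_order L A.Eo) (induced_left lam A.Eo)
        (induced_order L' (carrier L' - down_set L' c')) (induced_left lam' (carrier L' - down_set L' c')) \<phi>"
      using sim similar_iff_ex_similarity_map by blast
    then interpret cl_coatom_pair L lam c L' lam' c' \<phi>
      using A.cl_coatom_axioms cl_coatom[OF B] by (simp add: cl_coatom_pair_def cl_coatom_pair_axioms_def)
    show ?thesis using similarity_map_extension similar_iff_ex_similarity_map by blast
  qed
  then show ?thesis
    using A.down_set_c_chain A.down_set_c_subset_Cl A.sublattice_Eo A.slim_semimodular_diagram_Eo A.card_Eo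
    by blast
qed

end
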